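(* Let $k_0,k_1,k_{-1},k_2,e_T$ be nonnegative real parameters and consider the planar system \[ \dot s = k_0-k_1(e_T-c)s+k_{-1}c,\qquad \dot c = k_1(e_T-c)s-(k_{-1}+k_2)c . \] Then: (a) The system has infinitely many stationary points in $\mathbb{R}^2$ if and only if one of the following holds: $k_0=k_1=0$; $k_0=e_T=0$; $k_0=k_2=0$. (b) If the number of stationary points in $\mathbb{R}^2$ is finite, then it is $0$ or $1$. There is exactly one stationary point if and only if $k_1\neq 0$, $k_2\neq 0$ and $k_2e_T-k_0\neq 0$; in that case the stationary point is \[ P_0=(\widehat s,\widehat c)=\left(\frac{(k_{-1}+k_2)k_0}{k_1(k_2e_T-k_0)},\ \frac{k_0}{k_2}\right). \] This point lies in the first quadrant if and only if $k_2e_T-k_0>0$, in which case it is an attracting node; it lies in the second quadrant if and only if $k_2e_T-k_0<0$, in which case it is a saddle point. (c) The first quadrant is positively invariant, and solutions starting in the first quadrant exist for all $t\ge 0$. If $k_{-1}+k_2>0$, then every solution starting in the first quadrant enters the (positively invariant) subset $\{c\le e_T\}$ at some positive time. (d) The system admits no nonconstant closed trajectory.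
   Context: This is the mass-action model of the open Michaelis--Menten mechanism with constant substrate inflow: $s$ and $c$ are the concentrations of substrate and enzyme–substrate complex, $k_0$ the inflow rate, $k_1,k_{-1},k_2$ rate constants, and $e_T$ the total enzyme concentration. The "first quadrant" is $\{s\ge 0, c\ge 0\}$. *)

theory Defs
  imports "HOL-Analysis.Analysis"
begin

definition mm_field :: "real \<Rightarrow> real \<Rightarrow> real \<Rightarrow> real \<Rightarrow> real \<Rightarrow> real \<times> real \<Rightarrow> real \<times> real" where
  "mm_field k0 k1 km1 k2 eT = (\<lambda>(s, c).
     (k0 - k1 * (eT - c) * s + km1 * c, k1 * (eT - c) * s - (km1 + k2) * c))"

definition first_quadrant :: "(real \<times> real) set" where
  "first_quadrant = {p. fst p \<ge> 0 \<and> snd p \<ge> 0}"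

definition second_quadrant :: "(real \<times> real) set" where
  "second_quadrant = {p. fst p < 0 \<and> snd p > 0}"

definition is_solution :: "(real \<times> real \<Rightarrow> real \<times> real) \<Rightarrow> real set \<Rightarrow> (real \<Rightarrow> real \<times> real) \<Rightarrow> bool" where
  "is_solution F I x \<longleftrightarrow> is_interval I \<and>
     (\<forall>t\<in>I. (x has_vector_derivative F (x t)) (at t within I))"

definition jacobian2 :: "(real \<times> real \<Rightarrow> real \<times> real) \<Rightarrow> real \<times> real \<Rightarrow> real \<times> real \<times> real \<times> real" where
  "jacobian2 F p = (let L = (SOME L. (F has_derivative L) (at p))
     in (fst (L (1, 0)), fst (L (0, 1)), snd (L (1, 0)), snd (L (0, 1))))"

text \<open>(Complex) eigenvalues of the 2x2 real matrix ((a, b), (c, d)).\<close>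
definition eigenvalues2 :: "real \<times> real \<times> real \<times> real \<Rightarrow> complex set" where
  "eigenvalues2 M = (case M of (a, b, c, d) \<Rightarrow>
     {z. (complex_of_real a - z) * (complex_of_real d - z)
           - complex_of_real b * complex_of_real c = 0})"

definition attracting_node :: "(real \<times> real \<Rightarrow> real \<times> real) \<Rightarrow> real \<times> real \<Rightarrow> bool" where
  "attracting_node F p \<longleftrightarrow> F p = 0 \<and> F differentiable (at p) \<and>
     (\<forall>z\<in>eigenvalues2 (jacobian2 F p). Im z = 0 \<and> Re z < 0)"

definition saddle_point :: "(real \<times> real \<Rightarrow> real \<times> real) \<Rightarrow> real \<times> real \<Rightarrow> bool" where
  "saddle_point F p \<longleftrightarrow> F p = 0 \<and> F differentiable (at p) \<and>
     (\<forall>z\<in>eigenvalues2 (jacobian2 F p). Im z = 0 \<and> Re z \<noteq> 0) \<and>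
     (\<exists>z\<in>eigenvalues2 (jacobian2 F p). Re z < 0) \<and>
     (\<exists>z\<in>eigenvalues2 (jacobian2 F p). Re z > 0)"

end

theory Submission
  imports Defs
begin

(* The equilibria solve k2 c = k0 and k1 (eT - c) s = (km1 + k2) c, which is linear in s once c is
   fixed.  The Jacobian at P0 has trace < 0, determinant k1 k2 (eT - c0) and, in the first quadrant,
   a nonnegative discriminant, so P0 is a node or a saddle according to the sign of k2 eT - k0.

   The field is quasi-positive, so a comparison principle keeps the first quadrant and the strip
   c <= eT forward invariant.  Global solutions are obtained on successive unit time intervals from
   the field clamped to a box, which is globally Lipschitz; a priori bounds (s + c grows at most
   like k0 t) keep these solutions inside the box.  Above eT the complex decreases at least at the
   rate (km1 + k2) eT, so it eventually drops below eT.

   For a periodic solution: if c is constant then s + c is affine, hence constant.  If k1 = 0 then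
   c^2 is nonincreasing.  If c reaches eT, then eT - c >= 0 is forward invariant, so by periodicity
   that time is a minimum of eT - c, which forces c = eT throughout.  Otherwise eT - c has a fixed
   sign and, with w the horizontal distance to the nullcline of c, the system is a damped
   oscillator in (c, w) whose energy strictly decreases unless w = 0. *)

lemma has_real_derivative_fst:
  assumes "(x has_vector_derivative v) (at t within S)"
  shows "((\<lambda>t. fst (x t)) has_real_derivative fst v) (at t within S)"
  using bounded_linear.has_vector_derivative[OF bounded_linear_fst assms]
  by (simp add: has_real_derivative_iff_has_vector_derivative)

lemma has_real_derivative_snd:
  assumes "(x has_vector_derivative v) (at t within S)"
  shows "((\<lambda>t. snd (x t)) has_real_derivative snd v) (at t within S)"
  using bounded_linear.has_vector_derivative[OF bounded_linear_snd assms]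
  by (simp add: has_real_derivative_iff_has_vector_derivative)

lemma right_endpoint_min_imp_deriv_nonpos:
  fixes g :: "real \<Rightarrow> real"
  assumes "a < b" and "(g has_real_derivative D) (at b within {a..b})"
    and "\<And>\<tau>. \<tau> \<in> {a..<b} \<Longrightarrow> g b \<le> g \<tau>"
  shows "D \<le> 0"
proof -
  have "((\<lambda>y. (g y - g b) / (y - b)) \<longlongrightarrow> D) (at_left b)"
    using assms(2) at_within_Icc_at_left[OF assms(1)] by (simp add: has_field_derivative_iff)
  moreover have "eventually (\<lambda>y. (g y - g b) / (y - b) \<le> 0) (at_left b)"
    using assms(1,3) by (intro eventually_at_leftI[of a]) (auto intro!: divide_nonneg_neg)
  ultimately show ?thesis
    by (rule tendsto_upperbound) simp
qed

lemma first_zero_crossing: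
  fixes f :: "real \<Rightarrow> real"
  assumes cont: "continuous_on {a..b} f" and pos: "f a > 0"
    and t: "t \<in> {a..b}" "f t \<le> 0"
  obtains t1 where "t1 \<in> {a<..b}" "f t1 = 0" "\<And>\<tau>. \<tau> \<in> {a..<t1} \<Longrightarrow> f \<tau> > 0"
proof -
  define Z where "Z = {\<tau>\<in>{a..b}. f \<tau> \<le> 0}"
  have "closed Z"
    unfolding Z_def by (intro continuous_on_closed_Collect_le cont continuous_on_const) auto
  moreover have "bdd_below Z" "Z \<noteq> {}"
    using t unfolding Z_def bdd_below_def by auto
  ultimately have t1Z: "Inf Z \<in> Z"
    using closed_contains_Inf by blast
  have before: "f \<tau> > 0" if "\<tau> \<in> {a..<Inf Z}" for \<tau>
    using that t1Z cInf_lower[OF _ \<open>bdd_below Z\<close>, of \<tau>] unfolding Z_def by force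
  have a_less: "a < Inf Z"
    using t1Z pos unfolding Z_def by (metis (no_types, lifting) atLeastAtMost_iff mem_Collect_eq
        order_le_less not_le)
  have "continuous (at (Inf Z) within {a..Inf Z}) f"
    using continuous_on_subset[OF cont, of "{a..Inf Z}"] t1Z a_less
    by (auto simp: Z_def continuous_on_eq_continuous_within)
  then have "(f \<longlongrightarrow> f (Inf Z)) (at_left (Inf Z))"
    using at_within_Icc_at_left[OF a_less] by (simp add: continuous_within)
  moreover have "eventually (\<lambda>\<tau>. 0 \<le> f \<tau>) (at_left (Inf Z))"
    using before a_less by (intro eventually_at_leftI[of a]) (auto intro: less_imp_le)
  ultimately have "f (Inf Z) \<ge> 0"
    by (rule tendsto_lowerbound) simp
  with t1Z a_less before show ?thesis
    using that unfolding Z_def by force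
qed

lemma continuous_on_Icc_norm_bound:
  fixes f :: "real \<Rightarrow> 'a::real_normed_vector"
  assumes "continuous_on {a..b} f"
  obtains B where "B \<ge> 0" "\<And>\<tau>. \<tau> \<in> {a..b} \<Longrightarrow> norm (f \<tau>) \<le> B"
proof -
  have "bounded (f ` {a..b})"
    by (rule compact_imp_bounded[OF compact_continuous_image[OF assms compact_Icc]])
  then obtain B where "\<And>\<tau>. \<tau> \<in> {a..b} \<Longrightarrow> norm (f \<tau>) \<le> B"
    unfolding bounded_iff by blast
  then show ?thesis
    using that[of "max B 0"] by fastforce
qed

section \<open>A comparison principle\<close>

text \<open>The
  exponential perturbation \<open>E\<close> turns the weak inequalities into strict ones at a first exit time.\<close>

lemma first_touch_deriv_bound:
  fixes w E :: "real \<Rightarrow> real"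
  assumes K: "K \<ge> 0" and at: "a < t"
    and dw: "(w has_real_derivative w') (at t within {a..t})"
    and dE: "(E has_real_derivative (2*K+1) * E t) (at t within {a..t})"
    and E: "E t > 0" and touch: "w t + E t = 0" and before: "\<And>\<tau>. \<tau> \<in> {a..<t} \<Longrightarrow> w \<tau> + E \<tau> > 0"
    and z: "z + E t \<ge> 0"
  shows "w' < K * (w t + min 0 z)"
proof -
  have "w' + (2*K+1) * E t \<le> 0"
    using at DERIV_add[OF dw dE] by (rule right_endpoint_min_imp_deriv_nonpos) (use touch before in force)
  moreover have "K * (- E t - E t) \<le> K * (w t + min 0 z)"
    using K touch z E by (intro mult_left_mono) auto
  ultimately show ?thesis
    using E by (simp add: algebra_simps)
qed

lemma pair_deriv_bound_imp_pos_perturbed: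
  fixes u v u' v' :: "real \<Rightarrow> real"
  assumes K: "K \<ge> 0" and e: "e > 0"
    and du: "\<And>\<tau>. \<tau> \<in> {a..b} \<Longrightarrow> (u has_real_derivative u' \<tau>) (at \<tau> within {a..b})"
    and dv: "\<And>\<tau>. \<tau> \<in> {a..b} \<Longrightarrow> (v has_real_derivative v' \<tau>) (at \<tau> within {a..b})"
    and u0: "u a \<ge> 0" and v0: "v a \<ge> 0"
    and hu: "\<And>\<tau>. \<tau> \<in> {a..b} \<Longrightarrow> u \<tau> < 0 \<Longrightarrow> K * (u \<tau> + min 0 (v \<tau>)) \<le> u' \<tau>"
    and hv: "\<And>\<tau>. \<tau> \<in> {a..b} \<Longrightarrow> v \<tau> < 0 \<Longrightarrow> K * (v \<tau> + min 0 (u \<tau>)) \<le> v' \<tau>"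
    and t: "t \<in> {a..b}"
  shows "u t + e * exp ((2*K+1) * (t - a)) > 0 \<and> v t + e * exp ((2*K+1) * (t - a)) > 0"
proof (rule ccontr)
  define E where "E \<tau> = e * exp ((2*K+1) * (\<tau> - a))" for \<tau>
  have E_pos: "E \<tau> > 0" for \<tau>
    unfolding E_def using e by simp
  have dE: "(E has_real_derivative (2*K+1) * E \<tau>) (at \<tau> within S)" for \<tau> S
    unfolding E_def by (auto intro!: derivative_eq_intros)
  define m where "m \<tau> = min (u \<tau> + E \<tau>) (v \<tau> + E \<tau>)" for \<tau>
  have "continuous_on {a..b} (\<lambda>\<tau>. u \<tau> + E \<tau>)" "continuous_on {a..b} (\<lambda>\<tau>. v \<tau> + E \<tau>)"
    unfolding continuous_on_eq_continuous_within
    using DERIV_continuous[OF DERIV_add[OF du dE]] DERIV_continuous[OF DERIV_add[OF dv dE]] by blast+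
  then have "continuous_on {a..b} m"
    unfolding m_def by (rule continuous_on_min)
  moreover have "m a > 0"
    unfolding m_def using u0 v0 E_pos[of a] by simp
  moreover assume "\<not> ?thesis"
  then have "m t \<le> 0"
    unfolding m_def E_def by auto
  ultimately obtain t1 where t1: "t1 \<in> {a<..b}" "m t1 = 0" and before: "\<And>\<tau>. \<tau> \<in> {a..<t1} \<Longrightarrow> m \<tau> > 0"
    using first_zero_crossing t by blast
  have t1ab: "t1 \<in> {a..b}" and sub: "{a..t1} \<subseteq> {a..b}" and at1: "a < t1"
    using t1 by auto
  have u_before: "u \<tau> + E \<tau> > 0" and v_before: "v \<tau> + E \<tau> > 0" if "\<tau> \<in> {a..<t1}" for \<tau>
    using before[OF that] unfolding m_def by simp_all
  have "u t1 + E t1 \<ge> 0" "v t1 + E t1 \<ge> 0"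
    using t1(2) unfolding m_def by linarith+
  consider "u t1 + E t1 = 0" | "v t1 + E t1 = 0"
    using t1(2) unfolding m_def by linarith
  then show False
  proof cases
    case 1
    then have "u t1 < 0"
      using E_pos[of t1] by simp
    with hu[OF t1ab] first_touch_deriv_bound[OF K at1 DERIV_subset[OF du[OF t1ab] sub] dE E_pos 1 u_before]
    show False
      using \<open>v t1 + E t1 \<ge> 0\<close> by fastforce
  next
    case 2
    then have "v t1 < 0"
      using E_pos[of t1] by simp
    with hv[OF t1ab] first_touch_deriv_bound[OF K at1 DERIV_subset[OF dv[OF t1ab] sub] dE E_pos 2 v_before]
    show False
      using \<open>u t1 + E t1 \<ge> 0\<close> by fastforce
  qed
qed

lemma pair_deriv_bound_imp_nonneg:
  fixes u v u' v' :: "real \<Rightarrow> real"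
  assumes K: "K \<ge> 0"
    and du: "\<And>\<tau>. \<tau> \<in> {a..b} \<Longrightarrow> (u has_real_derivative u' \<tau>) (at \<tau> within {a..b})"
    and dv: "\<And>\<tau>. \<tau> \<in> {a..b} \<Longrightarrow> (v has_real_derivative v' \<tau>) (at \<tau> within {a..b})"
    and u0: "u a \<ge> 0" and v0: "v a \<ge> 0"
    and hu: "\<And>\<tau>. \<tau> \<in> {a..b} \<Longrightarrow> u \<tau> < 0 \<Longrightarrow> K * (u \<tau> + min 0 (v \<tau>)) \<le> u' \<tau>"
    and hv: "\<And>\<tau>. \<tau> \<in> {a..b} \<Longrightarrow> v \<tau> < 0 \<Longrightarrow> K * (v \<tau> + min 0 (u \<tau>)) \<le> v' \<tau>"
    and t: "t \<in> {a..b}"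
  shows "u t \<ge> 0 \<and> v t \<ge> 0"
proof (rule ccontr)
  define X where "X = exp ((2*K+1) * (t - a))"
  have X: "X > 0"
    unfolding X_def by simp
  assume "\<not> (u t \<ge> 0 \<and> v t \<ge> 0)"
  then have "- min (u t) (v t) > 0"
    by auto
  then have "- min (u t) (v t) / X > 0"
    using X by (rule divide_pos_pos)
  from pair_deriv_bound_imp_pos_perturbed[OF K this du dv u0 v0 hu hv t]
  show False
    using X unfolding X_def[symmetric] by (auto simp: min_def split: if_splits)
qed

lemma deriv_bound_imp_nonneg:
  fixes u u' :: "real \<Rightarrow> real"
  assumes K: "K \<ge> 0"
    and du: "\<And>\<tau>. \<tau> \<in> {a..b} \<Longrightarrow> (u has_real_derivative u' \<tau>) (at \<tau> within {a..b})"
    and u0: "u a \<ge> 0"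
    and hu: "\<And>\<tau>. \<tau> \<in> {a..b} \<Longrightarrow> u \<tau> < 0 \<Longrightarrow> K * u \<tau> \<le> u' \<tau>"
    and t: "t \<in> {a..b}"
  shows "u t \<ge> 0"
proof -
  have "K / 2 * (u \<tau> + min 0 (u \<tau>)) \<le> u' \<tau>" if "\<tau> \<in> {a..b}" "u \<tau> < 0" for \<tau>
    using hu[OF that] that(2) by simp
  with pair_deriv_bound_imp_nonneg[of "K / 2", OF _ du du u0 u0 _ _ t] K show ?thesis
    by simp
qed

lemma linear_deriv_imp_nonneg:
  fixes u f g :: "real \<Rightarrow> real"
  assumes du: "\<And>\<tau>. (u has_real_derivative f \<tau> - g \<tau> * u \<tau>) (at \<tau>)"
    and g: "continuous_on UNIV g" and f: "\<And>\<tau>. f \<tau> \<ge> 0"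
    and ab: "a \<le> b" and u0: "u a \<ge> 0"
  shows "u b \<ge> 0"
proof -
  obtain K where K: "K \<ge> 0" "\<And>\<tau>. \<tau> \<in> {a..b} \<Longrightarrow> norm (g \<tau>) \<le> K"
    using continuous_on_Icc_norm_bound continuous_on_subset[OF g] by blast
  show ?thesis
  proof (rule deriv_bound_imp_nonneg[OF K(1) has_field_derivative_at_within[OF du] u0])
    show "K * u \<tau> \<le> f \<tau> - g \<tau> * u \<tau>" if "\<tau> \<in> {a..b}" "u \<tau> < 0" for \<tau>
    proof -
      have "(K + g \<tau>) * u \<tau> \<le> 0"
        using K(2)[OF that(1)] that(2) by (intro mult_nonneg_nonpos) auto
      then show ?thesis
        using f[of \<tau>] by (simp add: algebra_simps)
    qed
  qed (use ab in auto)
qed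

section \<open>Periodic functions\<close>

lemma periodic_shift_nat:
  assumes per: "\<And>t. f (t + T) = f t"
  shows "f (t + real n * T) = f t"
proof (induction n)
  case (Suc n)
  then show ?case
    using per[of "t + real n * T"] by (simp add: algebra_simps)
qed simp

lemma periodic_nonincreasing_imp_const:
  fixes h :: "real \<Rightarrow> real"
  assumes mono: "\<And>a b. a \<le> b \<Longrightarrow> h b \<le> h a"
    and per: "\<And>t. h (t + T) = h t" and T: "T > 0"
  shows "h t = h s"
proof -
  have "h s \<le> h t" for s t
  proof -
    obtain n where "t - s < real n * T"
      using reals_Archimedean3[OF T] by blast
    then have "h (s + real n * T) \<le> h t"
      by (intro mono) simp
    then show ?thesis
      by (simp add: periodic_shift_nat[of h T, OF per])
  qed
  then show ?thesis
    by (meson order_antisym)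
qed

lemma periodic_deriv_nonpos_imp_zero:
  fixes h :: "real \<Rightarrow> real"
  assumes dh: "\<And>t. (h has_real_derivative h' t) (at t)" and nonpos: "\<And>t. h' t \<le> 0"
    and per: "\<And>t. h (t + T) = h t" and T: "T > 0"
  shows "h' t = 0"
proof -
  have "h s = h 0" for s
  proof (rule periodic_nonincreasing_imp_const[of h, OF _ per T])
    show "h b \<le> h a" if "a \<le> b" for a b
      using that by (rule DERIV_nonpos_imp_nonincreasing) (use dh nonpos in blast)
  qed
  then have "(h has_real_derivative 0) (at t)"
    by (metis DERIV_const ext)
  then show ?thesis
    using DERIV_unique dh by blast
qed

lemma periodic_forward_invariant_nonneg:
  fixes u :: "real \<Rightarrow> real"
  assumes per: "\<And>t. u (t + T) = u t" and T: "T > 0"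
    and fwd: "\<And>a b. a \<le> b \<Longrightarrow> 0 \<le> u a \<Longrightarrow> 0 \<le> u b" and s: "0 \<le> u s"
  shows "0 \<le> u t"
proof -
  obtain n where "s - t < real n * T"
    using reals_Archimedean3[OF T] by blast
  then have "0 \<le> u (t + real n * T)"
    by (intro fwd[OF _ s]) simp
  then show ?thesis
    by (simp add: periodic_shift_nat[of u T, OF per])
qed

section \<open>Eigenvalues of real 2x2 matrices\<close>

lemma eigenvalues2_Re_Im:
  assumes "z \<in> eigenvalues2 (a11, a12, a21, a22)"
  shows "(a11 - Re z) * (a22 - Re z) - (Im z)\<^sup>2 - a12 * a21 = 0"
    and "Im z * (2 * Re z - (a11 + a22)) = 0"
proof -
  let ?p = "(complex_of_real a11 - z) * (complex_of_real a22 - z) - complex_of_real a12 * complex_of_real a21"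
  have "?p = 0"
    using assms by (simp add: eigenvalues2_def)
  then have "Re ?p = 0" "Im ?p = 0"
    by simp_all
  then show "(a11 - Re z) * (a22 - Re z) - (Im z)\<^sup>2 - a12 * a21 = 0"
    and "Im z * (2 * Re z - (a11 + a22)) = 0"
    by (simp_all add: power2_eq_square algebra_simps)
qed

lemma eigenvalues2_real:
  assumes z: "z \<in> eigenvalues2 (a11, a12, a21, a22)"
    and disc: "(a11 + a22)\<^sup>2 - 4 * (a11 * a22 - a12 * a21) \<ge> 0"
  shows "Im z = 0"
proof (rule ccontr)
  assume "Im z \<noteq> 0"
  with eigenvalues2_Re_Im(2)[OF z] have "Re z = (a11 + a22) / 2"
    by simp
  with eigenvalues2_Re_Im(1)[OF z]
  have "(Im z)\<^sup>2 = (a11 * a22 - a12 * a21) - (a11 + a22)\<^sup>2 / 4"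
    by (simp add: power2_eq_square field_simps)
  moreover have "(Im z)\<^sup>2 > 0"
    using \<open>Im z \<noteq> 0\<close> by simp
  ultimately show False
    using disc by simp
qed

lemma eigenvalues2_real_char_poly:
  assumes "z \<in> eigenvalues2 (a11, a12, a21, a22)" "Im z = 0"
  shows "(Re z)\<^sup>2 - (a11 + a22) * Re z + (a11 * a22 - a12 * a21) = 0"
  using eigenvalues2_Re_Im(1)[OF assms(1)] assms(2) by (simp add: power2_eq_square algebra_simps)

lemma eigenvalues2_negative:
  assumes disc: "(a11 + a22)\<^sup>2 - 4 * (a11 * a22 - a12 * a21) \<ge> 0"
    and tr: "a11 + a22 < 0" and det: "a11 * a22 - a12 * a21 > 0"
    and z: "z \<in> eigenvalues2 (a11, a12, a21, a22)"
  shows "Im z = 0 \<and> Re z < 0"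
proof
  show im: "Im z = 0"
    by (rule eigenvalues2_real[OF z disc])
  show "Re z < 0"
  proof (rule ccontr)
    assume "\<not> Re z < 0"
    then have "(Re z)\<^sup>2 - (a11 + a22) * Re z + (a11 * a22 - a12 * a21) > 0"
      using tr det by (smt (verit) mult_nonpos_nonneg zero_le_power2)
    with eigenvalues2_real_char_poly[OF z im] show False
      by simp
  qed
qed

lemma eigenvalues2_saddle:
  assumes det: "a11 * a22 - a12 * a21 < 0"
  shows "\<forall>z\<in>eigenvalues2 (a11, a12, a21, a22). Im z = 0 \<and> Re z \<noteq> 0"
    and "\<exists>z\<in>eigenvalues2 (a11, a12, a21, a22). Re z < 0"
    and "\<exists>z\<in>eigenvalues2 (a11, a12, a21, a22). Re z > 0"
proof -
  define t where "t = a11 + a22"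
  define d where "d = a11 * a22 - a12 * a21"
  have disc: "t\<^sup>2 - 4 * d \<ge> 0"
    using det unfolding d_def by (smt (verit) zero_le_power2)
  show "\<forall>z\<in>eigenvalues2 (a11, a12, a21, a22). Im z = 0 \<and> Re z \<noteq> 0"
  proof
    fix z assume z: "z \<in> eigenvalues2 (a11, a12, a21, a22)"
    have im: "Im z = 0"
      by (rule eigenvalues2_real[OF z disc[unfolded t_def d_def]])
    with eigenvalues2_real_char_poly[OF z im] det show "Im z = 0 \<and> Re z \<noteq> 0"
      by auto
  qed
  define r where "r = sqrt (t\<^sup>2 - 4 * d)"
  have r2: "r\<^sup>2 = t\<^sup>2 - 4 * d" and "r \<ge> 0"
    unfolding r_def using disc by simp_all
  have "r\<^sup>2 > \<bar>t\<bar>\<^sup>2"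
    using r2 det unfolding d_def by simp
  then have r_gt: "r > \<bar>t\<bar>"
    using \<open>r \<ge> 0\<close> by (meson abs_ge_zero power_less_imp_less_base)
  have root: "complex_of_real ((t + \<epsilon> * r) / 2) \<in> eigenvalues2 (a11, a12, a21, a22)"
    if "\<epsilon> = 1 \<or> \<epsilon> = -1" for \<epsilon>
  proof -
    have "(a11 - (t + \<epsilon> * r) / 2) * (a22 - (t + \<epsilon> * r) / 2) - a12 * a21 = 0"
      using r2 that unfolding t_def d_def by (auto simp: power2_eq_square field_simps)
    then have "complex_of_real ((a11 - (t + \<epsilon> * r) / 2) * (a22 - (t + \<epsilon> * r) / 2) - a12 * a21) = 0"
      by simp
    then show ?thesis
      by (simp add: eigenvalues2_def)
  qed
  show "\<exists>z\<in>eigenvalues2 (a11, a12, a21, a22). Re z < 0"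
    using root[of "-1"] r_gt by (intro bexI[of _ "complex_of_real ((t + -1 * r) / 2)"]) auto
  show "\<exists>z\<in>eigenvalues2 (a11, a12, a21, a22). Re z > 0"
    using root[of 1] r_gt by (intro bexI[of _ "complex_of_real ((t + 1 * r) / 2)"]) auto
qed

section \<open>Solutions of globally Lipschitz autonomous equations\<close>

lemma integral_lipschitz_dist_le:
  fixes G :: "'a::banach \<Rightarrow> 'a" and y z :: "real \<Rightarrow>\<^sub>C 'a"
  assumes lip: "L-lipschitz_on UNIV G" and u: "u \<in> {0..h}"
  shows "dist (integral {0..u} (\<lambda>\<sigma>. G (y \<sigma>))) (integral {0..u} (\<lambda>\<sigma>. G (z \<sigma>))) \<le> L * h * dist y z"
proof -
  have cG: "continuous_on S (\<lambda>\<sigma>. G (apply_bcontfun w \<sigma>))" for w S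
    by (rule continuous_on_compose2[OF lipschitz_on_continuous_on[OF lip]]) auto
  have int: "(\<lambda>\<sigma>. G (apply_bcontfun w \<sigma>)) integrable_on {0..u}" for w
    by (rule integrable_continuous_interval[OF cG])
  have "dist (integral {0..u} (\<lambda>\<sigma>. G (y \<sigma>))) (integral {0..u} (\<lambda>\<sigma>. G (z \<sigma>)))
      = norm (integral {0..u} (\<lambda>\<sigma>. G (y \<sigma>) - G (z \<sigma>)))"
    using integral_diff[OF int int] by (simp add: dist_norm)
  also have "\<dots> \<le> L * dist y z * (u - 0)"
  proof (rule integral_bound)
    fix \<sigma>
    have "norm (G (y \<sigma>) - G (z \<sigma>)) \<le> L * dist (y \<sigma>) (z \<sigma>)"
      using lipschitz_onD[OF lip] by (simp add: dist_norm)
    also have "\<dots> \<le> L * dist y z"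
      using lipschitz_on_nonneg[OF lip] dist_bounded[of y \<sigma> z] by (simp add: mult_left_mono)
    finally show "norm (G (y \<sigma>) - G (z \<sigma>)) \<le> L * dist y z" .
  qed (use u in \<open>auto intro!: continuous_intros cG\<close>)
  also have "\<dots> \<le> L * dist y z * h"
    using u lipschitz_on_nonneg[OF lip] by (intro mult_left_mono) auto
  finally show ?thesis
    by (simp add: algebra_simps)
qed

text \<open>Picard iteration: on an interval of length \<open>1/(2L)\<close> the integral operator is a
  \<open>1/2\<close>-contraction on bounded continuous functions (extended constantly outside the interval).\<close>

lemma lipschitz_local_solution:
  fixes G :: "'a::banach \<Rightarrow> 'a"
  assumes L: "L > 0" and lip: "L-lipschitz_on UNIV G"
  shows "\<exists>y. y 0 = q \<and>
    (\<forall>t\<in>{0..1/(2*L)}. (y has_vector_derivative G (y t)) (at t within {0..1/(2*L)}))"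
proof -
  define h where "h = 1 / (2 * L)"
  have h: "h > 0" "L * h = 1/2"
    unfolding h_def using L by simp_all
  have cG: "continuous_on S (\<lambda>\<sigma>. G (apply_bcontfun y \<sigma>))" for y S
    by (rule continuous_on_compose2[OF lipschitz_on_continuous_on[OF lip]]) auto
  define f :: "(real \<Rightarrow>\<^sub>C 'a) \<Rightarrow> real \<Rightarrow> 'a"
    where "f y u = q + integral {0..u} (\<lambda>\<sigma>. G (apply_bcontfun y \<sigma>))" for y u
  have df: "(f y has_vector_derivative G (apply_bcontfun y t)) (at t within {0..h})"
    if "t \<in> {0..h}" for y t
    unfolding f_def
    by (rule derivative_eq_intros integral_has_vector_derivative[OF cG that] | simp)+
  have "continuous_on (cbox 0 h) (f y)" for y
    unfolding cbox_interval by (rule continuous_on_vector_derivative) (use df in blast)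
  then have "\<exists>g. \<forall>t. apply_bcontfun g t = f y (clamp 0 h t)" for y
    by (metis continuous_on_cbox_bcontfunE)
  then obtain \<Phi> where \<Phi>: "\<And>y t. apply_bcontfun (\<Phi> y) t = f y (clamp 0 h t)"
    by metis
  have "dist (\<Phi> y) (\<Phi> z) \<le> 1/2 * dist y z" for y z
  proof (rule dist_bound)
    fix t
    have "clamp 0 h t \<in> {0..h}"
      using clamp_in_interval[of 0 h t] h by (simp add: cbox_interval)
    then show "dist (\<Phi> y t) (\<Phi> z t) \<le> 1/2 * dist y z"
      using integral_lipschitz_dist_le[OF lip, of "clamp 0 h t" h y z] h unfolding \<Phi> f_def by simp
  qed
  then obtain y where fixp: "\<Phi> y = y"
    using banach_fix_type[of "1/2" \<Phi>] by auto
  have y_eq: "apply_bcontfun y t = f y t" if "t \<in> {0..h}" for t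
    using \<Phi>[of y t] fixp clamp_cancel_cbox[of t 0 h] that by (simp add: cbox_interval)
  show ?thesis
    unfolding h_def[symmetric]
  proof (intro exI conjI ballI)
    show "apply_bcontfun y 0 = q"
      using y_eq[of 0] h unfolding f_def by simp
    show "(apply_bcontfun y has_vector_derivative G (y t)) (at t within {0..h})"
      if "t \<in> {0..h}" for t
      using has_vector_derivative_transform[OF that y_eq df[OF that]] by simp
  qed
qed

lemma has_vector_derivative_within_localize:
  assumes "(f has_vector_derivative f') (at t within S)"
    and "t \<in> U" "open U" "T \<inter> U \<subseteq> S"
  shows "(f has_vector_derivative f') (at t within T)"
proof -
  have "at t within T = at t within (T \<inter> U)"
    by (rule at_within_nhd[of t U]) (use assms in auto)
  then show ?thesis
    using has_vector_derivative_within_subset[OF assms(1,4)] by simp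
qed

lemma has_vector_derivative_Icc_append:
  fixes f :: "real \<Rightarrow> 'a::real_normed_vector"
  assumes left: "\<And>\<tau>. \<tau> \<in> {a..b} \<Longrightarrow> (f has_vector_derivative f' \<tau>) (at \<tau> within {a..b})"
    and right: "\<And>\<tau>. \<tau> \<in> {b..c} \<Longrightarrow> (f has_vector_derivative f' \<tau>) (at \<tau> within {b..c})"
    and t: "t \<in> {a..c}"
  shows "(f has_vector_derivative f' t) (at t within {a..c})"
proof (cases t b rule: linorder_cases)
  case less
  with t show ?thesis
    by (intro has_vector_derivative_within_localize[OF left, of t "{..<b}"]) auto
next
  case equal
  have "(f has_vector_derivative f' t) (at t within ({a..b} \<union> {b..c}))"
    using left[of t] right[of t] t equal
    unfolding has_vector_derivative_def has_derivative_within by (auto intro: Lim_Un)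
  moreover have "{a..b} \<union> {b..c} = {a..c}"
    using t equal by auto
  ultimately show ?thesis
    by simp
next
  case greater
  with t show ?thesis
    by (intro has_vector_derivative_within_localize[OF right, of t "{b<..}"]) auto
qed

lemma has_vector_derivative_shift:
  assumes "(y has_vector_derivative D) (at (t - a) within {0..h})"
  shows "((\<lambda>\<tau>. y (\<tau> - a)) has_vector_derivative D) (at t within {a..a+h})"
proof -
  have "((\<lambda>\<tau>. \<tau> - a) has_vector_derivative 1) (at t within {a..a+h})"
    by (auto intro!: derivative_eq_intros)
  moreover have "(\<lambda>\<tau>. \<tau> - a) ` {a..a+h} = {0..h}"
    by simp
  ultimately show ?thesis
    using vector_diff_chain_within[of "\<lambda>\<tau>. \<tau> - a" 1 t "{a..a+h}" y D] assms by (simp add: o_def)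
qed

text \<open>Solutions on \<open>[0, h]\<close> that start and end in \<open>Q\<close> are concatenated at the points
  \<open>n h\<close>; no uniqueness is needed since each piece starts where the previous one ends.\<close>

lemma concat_pieces_has_vector_derivative:
  fixes Y :: "nat \<Rightarrow> real \<Rightarrow> 'a::real_normed_vector"
  assumes h: "h > 0" and join: "\<And>n. Y (Suc n) 0 = Y n h"
    and dY: "\<And>n t. t \<in> {0..h} \<Longrightarrow> (Y n has_vector_derivative G (Y n t)) (at t within {0..h})"
    and t: "t \<ge> 0"
  defines "x \<equiv> \<lambda>t. Y (nat \<lfloor>t / h\<rfloor>) (t - real (nat \<lfloor>t / h\<rfloor>) * h)"
  shows "(x has_vector_derivative G (x t)) (at t within {0..})"
proof -
  have floor: "nat \<lfloor>\<tau> / h\<rfloor> = n" if "real n * h \<le> \<tau>" "\<tau> < real n * h + h" for n \<tau>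
  proof -
    have "real n \<le> \<tau> / h" "\<tau> / h < real n + 1"
      using that h by (simp_all add: field_simps)
    then show ?thesis
      by linarith
  qed
  have piece: "x \<tau> = Y n (\<tau> - real n * h)" if "\<tau> \<in> {real n * h..real n * h + h}" for n \<tau>
  proof (cases "\<tau> < real n * h + h")
    case True
    then show ?thesis
      unfolding x_def using floor[of n \<tau>] that by simp
  next
    case False
    then have \<tau>: "\<tau> = real (Suc n) * h"
      using that by (simp add: algebra_simps)
    then have "nat \<lfloor>\<tau> / h\<rfloor> = Suc n"
      using floor[of "Suc n" \<tau>] h by simp
    then show ?thesis
      unfolding x_def using \<tau> join[of n] by (simp add: algebra_simps)
  qed
  have dpiece: "(x has_vector_derivative G (x \<tau>)) (at \<tau> within {real n * h..real n * h + h})"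
    if "\<tau> \<in> {real n * h..real n * h + h}" for n \<tau>
  proof -
    have "((\<lambda>\<sigma>. Y n (\<sigma> - real n * h)) has_vector_derivative G (Y n (\<tau> - real n * h)))
        (at \<tau> within {real n * h..real n * h + h})"
      using that by (intro has_vector_derivative_shift dY) auto
    then show ?thesis
      using has_vector_derivative_transform[OF that piece] piece[OF that] by simp
  qed
  have dinit: "\<forall>\<tau>\<in>{0..real (Suc n) * h}.
      (x has_vector_derivative G (x \<tau>)) (at \<tau> within {0..real (Suc n) * h})" for n
  proof (induction n)
    case 0
    then show ?case
      using dpiece[of _ 0] by simp
  next
    case (Suc n)
    have eq: "real (Suc (Suc n)) * h = real (Suc n) * h + h"
      by (simp add: algebra_simps)
    show ?case
      unfolding eq using Suc.IH by (blast intro: has_vector_derivative_Icc_append[OF _ dpiece])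
  qed
  obtain n where "t < real (Suc n) * h"
    using reals_Archimedean3[OF h] by (metis less_trans of_nat_Suc lessI of_nat_less_iff
        mult_strict_right_mono h)
  with t show ?thesis
    by (intro has_vector_derivative_within_localize[OF dinit[rule_format], of t n "{..<real (Suc n) * h}"])
      auto
qed

lemma solution_from_local_solutions:
  fixes G :: "'a::real_normed_vector \<Rightarrow> 'a"
  assumes h: "h > 0" and p: "p \<in> Q"
    and loc: "\<And>q. q \<in> Q \<Longrightarrow> \<exists>y. y 0 = q \<and> y h \<in> Q \<and>
                 (\<forall>t\<in>{0..h}. (y has_vector_derivative G (y t)) (at t within {0..h}))"
  shows "\<exists>x. x 0 = p \<and> (\<forall>t\<ge>0. (x has_vector_derivative G (x t)) (at t within {0..}))"
proof -
  define Y where "Y q = (SOME y. y 0 = q \<and> y h \<in> Q \<and>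
    (\<forall>t\<in>{0..h}. (y has_vector_derivative G (y t)) (at t within {0..h})))" for q
  have Y: "Y q 0 = q" "Y q h \<in> Q"
    "\<And>t. t \<in> {0..h} \<Longrightarrow> (Y q has_vector_derivative G (Y q t)) (at t within {0..h})"
    if "q \<in> Q" for q
    using someI_ex[OF loc[OF that]] unfolding Y_def[symmetric] by blast+
  define pts where "pts n = ((\<lambda>q. Y q h) ^^ n) p" for n
  have pts_Q: "pts n \<in> Q" for n
    by (induction n) (simp_all add: pts_def p Y(2))
  have "Y (pts (Suc n)) 0 = Y (pts n) h" for n
    using Y(1)[OF pts_Q[of "Suc n"]] by (simp add: pts_def)
  from concat_pieces_has_vector_derivative[of h "\<lambda>n. Y (pts n)", OF h this Y(3)[OF pts_Q]]
  show ?thesis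
    using Y(1)[OF p] by (intro exI[of _ "\<lambda>t. Y (pts (nat \<lfloor>t / h\<rfloor>)) (t - real (nat \<lfloor>t / h\<rfloor>) * h)"])
      (simp add: pts_def)
qed

lemma lipschitz_solution_halfline:
  fixes G :: "'a::banach \<Rightarrow> 'a"
  assumes "L > 0" "L-lipschitz_on UNIV G"
  shows "\<exists>x. x 0 = p \<and> (\<forall>t\<ge>0. (x has_vector_derivative G (x t)) (at t within {0..}))"
  using lipschitz_local_solution[OF assms]
  by (intro solution_from_local_solutions[of "1/(2*L)" p UNIV]) (use assms in auto)

section \<open>Equilibria and their linearization\<close>

lemma abs_fst_le_norm: "\<bar>fst p\<bar> \<le> norm p" for p :: "real \<times> real"
  by (metis norm_fst_le prod.collapse real_norm_def)

lemma abs_snd_le_norm: "\<bar>snd p\<bar> \<le> norm p" for p :: "real \<times> real"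
  by (metis norm_snd_le prod.collapse real_norm_def)

lemma mm_field_apply:
  "mm_field k0 k1 km1 k2 eT p =
    (k0 - k1 * (eT - snd p) * fst p + km1 * snd p, k1 * (eT - snd p) * fst p - (km1 + k2) * snd p)"
  by (cases p) (simp add: mm_field_def)

lemma mm_field_eq_0_iff:
  "mm_field k0 k1 km1 k2 eT p = 0 \<longleftrightarrow>
     k2 * snd p = k0 \<and> k1 * (eT - snd p) * fst p = (km1 + k2) * snd p"
  unfolding mm_field_apply zero_prod_def by (auto simp: algebra_simps)

lemma mm_equilibria_unique:
  assumes "k1 \<noteq> 0" "k2 \<noteq> 0" "k2 * eT - k0 \<noteq> 0"
  shows "{p. mm_field k0 k1 km1 k2 eT p = 0} = {((km1 + k2) * k0 / (k1 * (k2 * eT - k0)), k0 / k2)}"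
proof -
  have D: "eT - k0 / k2 = (k2 * eT - k0) / k2"
    using assms by (simp add: field_simps)
  have "p = ((km1 + k2) * k0 / (k1 * (k2 * eT - k0)), k0 / k2)"
    if eq: "k2 * snd p = k0" "k1 * (eT - snd p) * fst p = (km1 + k2) * snd p" for p
  proof -
    have c: "snd p = k0 / k2"
      using eq(1) assms by (simp add: field_simps)
    then have "k1 * (eT - snd p) \<noteq> 0"
      using assms D by simp
    then have "fst p = (km1 + k2) * snd p / (k1 * (eT - snd p))"
      using eq(2) by (simp add: eq_divide_eq mult.commute)
    also have "\<dots> = (km1 + k2) * k0 / (k1 * (k2 * eT - k0))"
      unfolding c D using assms by (simp add: field_simps)
    finally show ?thesis
      using c by (simp add: prod_eq_iff)
  qed
  moreover have "k1 * (eT - k0 / k2) * ((km1 + k2) * k0 / (k1 * (k2 * eT - k0))) = (km1 + k2) * (k0 / k2)"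
    unfolding D using assms by (simp add: field_simps)
  ultimately show ?thesis
    using assms by (auto simp: mm_field_eq_0_iff)
qed

lemma mm_equilibria_infinite:
  assumes "(k0 = 0 \<and> k1 = 0) \<or> (k0 = 0 \<and> eT = 0) \<or> (k0 = 0 \<and> k2 = 0)"
  shows "infinite {p. mm_field k0 k1 km1 k2 eT p = 0}"
proof (cases "k0 = 0 \<and> (k1 = 0 \<or> eT = 0)")
  case True
  then have "range (\<lambda>s. (s, 0)) \<subseteq> {p. mm_field k0 k1 km1 k2 eT p = 0}"
    by (auto simp: mm_field_eq_0_iff)
  moreover have "infinite (range (\<lambda>s::real. (s, 0::real)))"
    using finite_imageD[of "\<lambda>s::real. (s, 0::real)" UNIV] infinite_UNIV_char_0
    by (auto simp: inj_on_def)
  ultimately show ?thesis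
    using finite_subset by blast
next
  case False
  with assms have "k0 = 0" "k2 = 0" "k1 \<noteq> 0"
    by auto
  \<comment> \<open>then the whole branch \<open>s = km1 c / (k1 (eT - c))\<close> consists of equilibria\<close>
  define g where "g c = (km1 * c / (k1 * (eT - c)), c)" for c
  have "g ` {eT+1..eT+2} \<subseteq> {p. mm_field k0 k1 km1 k2 eT p = 0}"
    using \<open>k0 = 0\<close> \<open>k2 = 0\<close> \<open>k1 \<noteq> 0\<close> by (auto simp: mm_field_eq_0_iff g_def field_simps)
  moreover have "infinite (g ` {eT+1..eT+2})"
  proof -
    have "infinite {eT+1..eT+2}"
      by (rule infinite_Icc) simp
    moreover have "inj_on g {eT+1..eT+2}"
      by (auto simp: g_def inj_on_def)
    ultimately show ?thesis
      using finite_imageD by blast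
  qed
  ultimately show ?thesis
    using finite_subset by blast
qed

lemma mm_equilibria_empty:
  assumes "k1 \<ge> 0" "km1 \<ge> 0" "k2 \<ge> 0"
    and "\<not> (k1 \<noteq> 0 \<and> k2 \<noteq> 0 \<and> k2 * eT - k0 \<noteq> 0)"
    and "\<not> ((k0 = 0 \<and> k1 = 0) \<or> (k0 = 0 \<and> eT = 0) \<or> (k0 = 0 \<and> k2 = 0))"
  shows "{p. mm_field k0 k1 km1 k2 eT p = 0} = {}"
proof (rule ccontr)
  assume "{p. mm_field k0 k1 km1 k2 eT p = 0} \<noteq> {}"
  then obtain s c where eq: "k2 * c = k0" "k1 * (eT - c) * s = (km1 + k2) * c"
    by (auto simp: mm_field_eq_0_iff)
  have "k2 \<noteq> 0"
    using assms(5) eq(1) by auto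
  have "(km1 + k2) * c = 0"
  proof (cases "k1 = 0")
    case False
    with assms(4) \<open>k2 \<noteq> 0\<close> have "k2 * eT = k2 * c"
      using eq(1) by simp
    with \<open>k2 \<noteq> 0\<close> eq(2) show ?thesis
      by simp
  qed (use eq in simp)
  then have "c = 0"
    using \<open>k2 \<noteq> 0\<close> assms(2,3) by simp
  with eq(1) assms(4,5) \<open>k2 \<noteq> 0\<close> show False
    by auto
qed

lemma mm_field_has_derivative:
  "(mm_field k0 k1 km1 k2 eT has_derivative
     (\<lambda>h. (- k1 * (eT - snd p) * fst h + (k1 * fst p + km1) * snd h,
           k1 * (eT - snd p) * fst h - (k1 * fst p + km1 + k2) * snd h))) (at p)"
proof -
  have F: "mm_field k0 k1 km1 k2 eT = (\<lambda>p. (k0 - k1 * (eT - snd p) * fst p + km1 * snd p,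
      k1 * (eT - snd p) * fst p - (km1 + k2) * snd p))"
    by (rule ext) (simp add: mm_field_apply)
  show ?thesis
    unfolding F by (auto intro!: derivative_eq_intros simp: algebra_simps fun_eq_iff)
qed

lemma mm_field_jacobian:
  "jacobian2 (mm_field k0 k1 km1 k2 eT) p =
     (- k1 * (eT - snd p), k1 * fst p + km1, k1 * (eT - snd p), - (k1 * fst p + km1 + k2))"
proof -
  have "(SOME L. (mm_field k0 k1 km1 k2 eT has_derivative L) (at p)) =
      (\<lambda>h. (- k1 * (eT - snd p) * fst h + (k1 * fst p + km1) * snd h,
           k1 * (eT - snd p) * fst h - (k1 * fst p + km1 + k2) * snd h))"
    using mm_field_has_derivative has_derivative_unique by (metis (no_types, lifting) someI_ex)
  then show ?thesis
    unfolding jacobian2_def Let_def by simp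
qed

lemma mm_field_jacobian_at:
  "jacobian2 (mm_field k0 k1 km1 k2 eT) p = (- a, b, a, - (b + k2))"
  if "a = k1 * (eT - snd p)" "b = k1 * fst p + km1"
  unfolding mm_field_jacobian that by simp

lemma mm_field_differentiable: "mm_field k0 k1 km1 k2 eT differentiable (at p)"
  using mm_field_has_derivative unfolding differentiable_def by blast

lemma mm_attracting_node:
  assumes "mm_field k0 k1 km1 k2 eT p = 0"
    and "k1 * (eT - snd p) > 0" and "k1 * fst p + km1 \<ge> 0" and k2: "k2 > 0"
  shows "attracting_node (mm_field k0 k1 km1 k2 eT) p"
proof -
  define a where "a = k1 * (eT - snd p)"
  define b where "b = k1 * fst p + km1"
  have a: "a > 0" and b: "b \<ge> 0"
    using assms(2,3) unfolding a_def b_def by simp_all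
  have "(- a + - (b + k2))\<^sup>2 - 4 * (- a * - (b + k2) - b * a) = (a - k2)\<^sup>2 + b\<^sup>2 + 2*a*b + 2*b*k2"
    by (simp add: power2_eq_square algebra_simps)
  also have "\<dots> \<ge> 0"
    using a b k2 by simp
  finally have disc: "(- a + - (b + k2))\<^sup>2 - 4 * (- a * - (b + k2) - b * a) \<ge> 0" .
  have tr: "- a + - (b + k2) < 0"
    using a b k2 by simp
  have "- a * - (b + k2) - b * a = a * k2"
    by (simp add: algebra_simps)
  then have det: "- a * - (b + k2) - b * a > 0"
    using a k2 by simp
  show ?thesis
    using assms(1) eigenvalues2_negative[OF disc tr det] mm_field_differentiable
    unfolding attracting_node_def mm_field_jacobian_at[OF a_def b_def] by blast
qed

lemma mm_saddle_point:
  assumes "mm_field k0 k1 km1 k2 eT p = 0"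
    and "k1 * (eT - snd p) < 0" and k2: "k2 > 0"
  shows "saddle_point (mm_field k0 k1 km1 k2 eT) p"
proof -
  define a where "a = k1 * (eT - snd p)"
  define b where "b = k1 * fst p + km1"
  have "- a * - (b + k2) - b * a = a * k2"
    by (simp add: algebra_simps)
  then have det: "- a * - (b + k2) - b * a < 0"
    using assms(2) k2 unfolding a_def by (simp add: mult_neg_pos)
  show ?thesis
    using assms(1) eigenvalues2_saddle[OF det] mm_field_differentiable
    unfolding saddle_point_def mm_field_jacobian_at[OF a_def b_def] by blast
qed

lemma mm_equilibrium_classification:
  fixes k0 k1 km1 k2 eT :: real
  assumes nn: "k0 \<ge> 0" "k1 \<ge> 0" "km1 \<ge> 0" "k2 \<ge> 0" "eT \<ge> 0"
    and nz: "k1 \<noteq> 0" "k2 \<noteq> 0" "k2 * eT - k0 \<noteq> 0"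
  defines "P0 \<equiv> ((km1 + k2) * k0 / (k1 * (k2 * eT - k0)), k0 / k2)"
  shows "(P0 \<in> first_quadrant \<longleftrightarrow> k2 * eT - k0 > 0)
      \<and> (k2 * eT - k0 > 0 \<longrightarrow> attracting_node (mm_field k0 k1 km1 k2 eT) P0)
      \<and> (P0 \<in> second_quadrant \<longleftrightarrow> k2 * eT - k0 < 0)
      \<and> (k2 * eT - k0 < 0 \<longrightarrow> saddle_point (mm_field k0 k1 km1 k2 eT) P0)"
proof -
  define D where "D = k2 * eT - k0"
  have k1: "k1 > 0" and k2: "k2 > 0"
    using nn nz by auto
  have eq: "mm_field k0 k1 km1 k2 eT P0 = 0"
    using mm_equilibria_unique[OF nz] unfolding P0_def by blast
  have a: "k1 * (eT - snd P0) = k1 * D / k2"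
    unfolding P0_def D_def using k2 by (simp add: field_simps)
  have pos: "fst P0 \<ge> 0 \<and> snd P0 \<ge> 0" if "D > 0"
    using that nn k1 k2 unfolding P0_def D_def by simp
  have neg: "fst P0 < 0 \<and> snd P0 > 0" if "D < 0"
  proof -
    have "k0 > 0"
      using that mult_nonneg_nonneg[OF nn(4,5)] unfolding D_def by linarith
    then have "(km1 + k2) * k0 > 0"
      using nn(3) k2 by simp
    moreover have "k1 * D < 0"
      using that k1 by (simp add: mult_pos_neg)
    ultimately have "(km1 + k2) * k0 / (k1 * D) < 0"
      by (rule divide_pos_neg)
    then show ?thesis
      using \<open>k0 > 0\<close> k2 unfolding P0_def D_def by simp
  qed
  show ?thesis
  proof (intro conjI impI)
    show "P0 \<in> first_quadrant \<longleftrightarrow> k2 * eT - k0 > 0"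
      using pos neg nz(3) unfolding first_quadrant_def D_def by (cases "k2 * eT - k0 > 0") auto
    show "P0 \<in> second_quadrant \<longleftrightarrow> k2 * eT - k0 < 0"
      using pos neg nz(3) unfolding second_quadrant_def D_def by (cases "k2 * eT - k0 > 0") auto
  next
    assume "k2 * eT - k0 > 0"
    then show "attracting_node (mm_field k0 k1 km1 k2 eT) P0"
      using pos k1 k2 nn a unfolding D_def by (intro mm_attracting_node[OF eq]) simp_all
  next
    assume "k2 * eT - k0 < 0"
    then show "saddle_point (mm_field k0 k1 km1 k2 eT) P0"
      using k1 k2 a unfolding D_def by (intro mm_saddle_point[OF eq]) (simp_all add: divide_neg_pos mult_pos_neg)
  qed
qed

section \<open>Invariant regions\<close>

lemma is_solution_on_Icc:
  assumes "is_solution F I x" "a \<in> I" "b \<in> I"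
  shows "{a..b} \<subseteq> I"
    and "\<And>\<tau>. \<tau> \<in> {a..b} \<Longrightarrow> (x has_vector_derivative F (x \<tau>)) (at \<tau> within {a..b})"
proof -
  have "is_interval I" and d: "\<And>\<tau>. \<tau> \<in> I \<Longrightarrow> (x has_vector_derivative F (x \<tau>)) (at \<tau> within I)"
    using assms(1) unfolding is_solution_def by simp_all
  then show sub: "{a..b} \<subseteq> I"
    using is_interval_1[THEN iffD1, rule_format, OF _ assms(2,3)] by auto
  show "(x has_vector_derivative F (x \<tau>)) (at \<tau> within {a..b})" if "\<tau> \<in> {a..b}" for \<tau>
    using has_vector_derivative_within_subset[OF d sub] sub that by blast
qed

lemma mm_field_negative_part_bounds:
  fixes k0 k1 km1 k2 eT :: real
  assumes nn: "k0 \<ge> 0" "k1 \<ge> 0" "km1 \<ge> 0" "k2 \<ge> 0" "eT \<ge> 0"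
    and sB: "\<bar>s\<bar> \<le> B" and cB: "\<bar>c\<bar> \<le> B"
  defines "K \<equiv> k1 * (eT + B) + km1 + k2"
  shows "s < 0 \<Longrightarrow> K * (s + min 0 c) \<le> fst (mm_field k0 k1 km1 k2 eT (s, c))"
    and "c < 0 \<Longrightarrow> K * (c + min 0 s) \<le> snd (mm_field k0 k1 km1 k2 eT (s, c))"
proof -
  have B_nonneg: "B \<ge> 0"
    using sB by linarith
  have "K + k1 * (eT - c) = 2 * (k1 * eT) + k1 * (B - c) + km1 + k2"
    unfolding K_def by (simp add: algebra_simps)
  also have "\<dots> \<ge> 0"
    using mult_nonneg_nonneg[of k1 "B - c"] cB nn by simp
  finally have K1: "K + k1 * (eT - c) \<ge> 0" .
  have "K + (k1 * s + km1 + k2) = k1 * eT + k1 * (B + s) + 2 * (km1 + k2)"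
    unfolding K_def by (simp add: algebra_simps)
  also have "\<dots> \<ge> 0"
    using mult_nonneg_nonneg[of k1 "B + s"] sB nn by simp
  finally have K2: "K + (k1 * s + km1 + k2) \<ge> 0" .
  have m1: "K * min 0 c \<le> km1 * c"
  proof (cases "c < 0")
    case True
    have "K - km1 \<ge> 0"
      unfolding K_def using nn B_nonneg by simp
    with True have "(K - km1) * c \<le> 0"
      by (simp add: mult_nonneg_nonpos)
    with True show ?thesis
      by (simp add: left_diff_distrib)
  qed (use nn in simp)
  have m2: "K * min 0 s \<le> k1 * eT * s"
  proof (cases "s < 0")
    case True
    have "K - k1 * eT = k1 * B + km1 + k2"
      unfolding K_def by (simp add: algebra_simps)
    then have "K - k1 * eT \<ge> 0"
      using nn B_nonneg by simp
    with True have "(K - k1 * eT) * s \<le> 0"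
      by (simp add: mult_nonneg_nonpos)
    with True show ?thesis
      by (simp add: left_diff_distrib)
  qed (use nn in simp)
  show "K * (s + min 0 c) \<le> fst (mm_field k0 k1 km1 k2 eT (s, c))" if "s < 0"
  proof -
    have "(K + k1 * (eT - c)) * s \<le> 0"
      using K1 that by (simp add: mult_nonneg_nonpos)
    then have "K * s \<le> - (k1 * (eT - c) * s)"
      by (simp add: distrib_right)
    then show ?thesis
      using m1 nn(1) by (simp add: mm_field_def distrib_left)
  qed
  show "K * (c + min 0 s) \<le> snd (mm_field k0 k1 km1 k2 eT (s, c))" if "c < 0"
  proof -
    have "(K + (k1 * s + km1 + k2)) * c \<le> 0"
      using K2 that by (simp add: mult_nonneg_nonpos)
    then have "K * c \<le> - ((k1 * s + km1 + k2) * c)"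
      by (simp add: distrib_right)
    moreover have "snd (mm_field k0 k1 km1 k2 eT (s, c)) = k1 * eT * s - (k1 * s + km1 + k2) * c"
      by (simp add: mm_field_def algebra_simps)
    ultimately show ?thesis
      using m2 by (simp add: distrib_left)
  qed
qed

lemma mm_first_quadrant_invariant:
  fixes k0 k1 km1 k2 eT :: real
  assumes nn: "k0 \<ge> 0" "k1 \<ge> 0" "km1 \<ge> 0" "k2 \<ge> 0" "eT \<ge> 0"
    and sol: "is_solution (mm_field k0 k1 km1 k2 eT) I x" and I: "0 \<in> I" "t \<in> I"
    and t: "t \<ge> 0" and x0: "x 0 \<in> first_quadrant"
  shows "x t \<in> first_quadrant"
proof -
  let ?F = "mm_field k0 k1 km1 k2 eT"
  note d = is_solution_on_Icc(2)[OF sol I]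
  have "continuous_on {0..t} x"
    by (rule continuous_on_vector_derivative) (use d in blast)
  then obtain B where "B \<ge> 0" and B: "\<And>\<tau>. \<tau> \<in> {0..t} \<Longrightarrow> norm (x \<tau>) \<le> B"
    using continuous_on_Icc_norm_bound by blast
  have sB: "\<bar>fst (x \<tau>)\<bar> \<le> B" and cB: "\<bar>snd (x \<tau>)\<bar> \<le> B" if "\<tau> \<in> {0..t}" for \<tau>
    using B[OF that] abs_fst_le_norm[of "x \<tau>"] abs_snd_le_norm[of "x \<tau>"] by simp_all
  define K where "K = k1 * (eT + B) + km1 + k2"
  have "fst (x t) \<ge> 0 \<and> snd (x t) \<ge> 0"
  proof (rule pair_deriv_bound_imp_nonneg[where K = K and a = 0 and b = t
        and u = "\<lambda>\<tau>. fst (x \<tau>)" and u' = "\<lambda>\<tau>. fst (?F (x \<tau>))"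
        and v = "\<lambda>\<tau>. snd (x \<tau>)" and v' = "\<lambda>\<tau>. snd (?F (x \<tau>))"])
    show "K \<ge> 0"
      unfolding K_def using nn \<open>B \<ge> 0\<close> by simp
    show "((\<lambda>\<tau>. fst (x \<tau>)) has_real_derivative fst (?F (x \<tau>))) (at \<tau> within {0..t})"
      "((\<lambda>\<tau>. snd (x \<tau>)) has_real_derivative snd (?F (x \<tau>))) (at \<tau> within {0..t})"
      if "\<tau> \<in> {0..t}" for \<tau>
      using has_real_derivative_fst[OF d[OF that]] has_real_derivative_snd[OF d[OF that]] by auto
    show "K * (fst (x \<tau>) + min 0 (snd (x \<tau>))) \<le> fst (?F (x \<tau>))"
      if "\<tau> \<in> {0..t}" "fst (x \<tau>) < 0" for \<tau>
      using mm_field_negative_part_bounds(1)[OF nn sB[OF that(1)] cB[OF that(1)] that(2)]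
      unfolding K_def by simp
    show "K * (snd (x \<tau>) + min 0 (fst (x \<tau>))) \<le> snd (?F (x \<tau>))"
      if "\<tau> \<in> {0..t}" "snd (x \<tau>) < 0" for \<tau>
      using mm_field_negative_part_bounds(2)[OF nn sB[OF that(1)] cB[OF that(1)] that(2)]
      unfolding K_def by simp
  qed (use x0 t in \<open>auto simp: first_quadrant_def\<close>)
  then show ?thesis
    by (simp add: first_quadrant_def)
qed

lemma mm_complex_bound_invariant:
  fixes k0 k1 km1 k2 eT :: real
  assumes nn: "k0 \<ge> 0" "k1 \<ge> 0" "km1 \<ge> 0" "k2 \<ge> 0" "eT \<ge> 0"
    and sol: "is_solution (mm_field k0 k1 km1 k2 eT) I x" and I: "0 \<in> I" "t \<in> I"
    and t: "t \<ge> 0" and x0: "x 0 \<in> first_quadrant" and c0: "snd (x 0) \<le> eT"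
  shows "x t \<in> first_quadrant \<and> snd (x t) \<le> eT"
proof -
  let ?F = "mm_field k0 k1 km1 k2 eT"
  have Q: "fst (x \<tau>) \<ge> 0" if "\<tau> \<in> {0..t}" for \<tau>
    using mm_first_quadrant_invariant[OF nn sol I(1) _ _ x0, of \<tau>] is_solution_on_Icc(1)[OF sol I] that
    by (auto simp: first_quadrant_def)
  have "eT - snd (x t) \<ge> 0"
  proof (rule deriv_bound_imp_nonneg[where K = 0 and a = 0 and b = t and u = "\<lambda>\<tau>. eT - snd (x \<tau>)"
        and u' = "\<lambda>\<tau>. - snd (?F (x \<tau>))"])
    show "((\<lambda>\<tau>. eT - snd (x \<tau>)) has_real_derivative - snd (?F (x \<tau>))) (at \<tau> within {0..t})"
      if "\<tau> \<in> {0..t}" for \<tau>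
      using has_real_derivative_snd[OF is_solution_on_Icc(2)[OF sol I that]]
      by (auto intro!: derivative_eq_intros)
    show "0 * (eT - snd (x \<tau>)) \<le> - snd (?F (x \<tau>))"
      if "\<tau> \<in> {0..t}" "eT - snd (x \<tau>) < 0" for \<tau>
    proof -
      have "(k1 * fst (x \<tau>) + km1 + k2) * (eT - snd (x \<tau>)) \<le> 0"
        using Q[OF that(1)] that(2) nn by (intro mult_nonneg_nonpos) auto
      moreover have "- snd (?F (x \<tau>)) = (km1 + k2) * eT - (k1 * fst (x \<tau>) + km1 + k2) * (eT - snd (x \<tau>))"
        by (simp add: mm_field_apply algebra_simps)
      moreover have "(km1 + k2) * eT \<ge> 0"
        using nn by simp
      ultimately show ?thesis
        by simp
    qed
  qed (use c0 t in auto)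
  then show ?thesis
    using mm_first_quadrant_invariant[OF nn sol I t x0] by simp
qed

lemma is_solution_halfline_at:
  assumes "is_solution F {0..} x" "t > 0"
  shows "(x has_vector_derivative F (x t)) (at t)"
proof -
  have "(x has_vector_derivative F (x t)) (at t within {0..})"
    using assms unfolding is_solution_def by simp
  then have "(x has_vector_derivative F (x t)) (at t within UNIV)"
    by (rule has_vector_derivative_within_localize[of _ _ _ _ "{0<..}"]) (use assms(2) in auto)
  then show ?thesis
    by simp
qed

lemma mm_enters_complex_bound:
  fixes k0 k1 km1 k2 eT :: real
  assumes nn: "k0 \<ge> 0" "k1 \<ge> 0" "km1 \<ge> 0" "k2 \<ge> 0" "eT \<ge> 0"
    and \<gamma>: "km1 + k2 > 0" and eT: "eT > 0"
    and sol: "is_solution (mm_field k0 k1 km1 k2 eT) {0..} x" and x0: "x 0 \<in> first_quadrant"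
  shows "\<exists>t>0. snd (x t) \<le> eT"
proof (rule ccontr)
  let ?F = "mm_field k0 k1 km1 k2 eT"
  define r where "r = (km1 + k2) * eT"
  have r: "r > 0"
    unfolding r_def using \<gamma> eT by simp
  assume "\<not> ?thesis"
  then have above: "snd (x t) > eT" if "t > 0" for t
    using that by auto
  \<comment> \<open>while \<open>c > eT\<close>, the complex decays at least at the rate \<open>(km1 + k2) eT\<close>\<close>
  define h where "h t = snd (x t) + r * t" for t
  have h_deriv: "(h has_real_derivative snd (?F (x \<tau>)) + r) (at \<tau>)" if "\<tau> > 0" for \<tau>
    unfolding h_def using has_real_derivative_snd[OF is_solution_halfline_at[OF sol that]]
    by (auto intro!: derivative_eq_intros)
  have h_deriv_nonpos: "snd (?F (x \<tau>)) + r \<le> 0" if "\<tau> > 0" for \<tau>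
  proof -
    have "fst (x \<tau>) \<ge> 0"
      using mm_first_quadrant_invariant[OF nn sol _ _ _ x0, of \<tau>] that
      by (auto simp: first_quadrant_def)
    then have "k1 * (eT - snd (x \<tau>)) * fst (x \<tau>) \<le> 0"
      using nn above[OF that] by (simp add: mult_nonpos_nonneg mult_nonneg_nonpos)
    moreover have "(km1 + k2) * eT \<le> (km1 + k2) * snd (x \<tau>)"
      using nn above[OF that] by (simp add: mult_left_mono)
    ultimately show ?thesis
      unfolding r_def by (simp add: mm_field_apply)
  qed
  define T where "T = 2 + snd (x 1) / r"
  have "T \<ge> 1"
    unfolding T_def using r above[of 1] eT by simp
  have "h T \<le> h 1"
  proof (rule DERIV_nonpos_imp_nonincreasing[OF \<open>T \<ge> 1\<close>])
    show "\<exists>y. (h has_real_derivative y) (at \<tau>) \<and> y \<le> 0" if "1 \<le> \<tau>" for \<tau>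
      using h_deriv[of \<tau>] h_deriv_nonpos[of \<tau>] that by auto
  qed
  moreover have "r * T = 2 * r + snd (x 1)"
    unfolding T_def using r by (simp add: field_simps)
  moreover have "snd (x T) > eT"
    using above \<open>T \<ge> 1\<close> by simp
  ultimately show False
    using r eT unfolding h_def by linarith
qed

section \<open>Global existence in the first quadrant\<close>

lemma clamp_real_pair:
  fixes S C s c :: real
  assumes "S \<ge> 0" "C \<ge> 0"
  shows "clamp (0, 0) (S, C) (s, c) = (max 0 (min S s), max 0 (min C c))"
  using assms by (simp add: clamp_def Basis_prod_def inner_prod_def max_def min_def)

lemma mm_field_lipschitz_on_box:
  fixes k0 k1 km1 k2 eT S C :: real
  assumes nn: "k1 \<ge> 0" "km1 \<ge> 0" "k2 \<ge> 0" "eT \<ge> 0" and SC: "S \<ge> 0" "C \<ge> 0"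
  shows "(2 * k1 * (eT + S + C) + 2 * km1 + k2)-lipschitz_on (cbox (0, 0) (S, C))
    (mm_field k0 k1 km1 k2 eT)"
proof (rule lipschitz_onI)
  fix a b :: "real \<times> real"
  assume "a \<in> cbox (0, 0) (S, C)" "b \<in> cbox (0, 0) (S, C)"
  moreover obtain s1 c1 s2 c2 where ab: "a = (s1, c1)" "b = (s2, c2)"
    by (cases a, cases b)
  ultimately have box: "\<bar>eT - c1\<bar> \<le> eT + C" "\<bar>s2\<bar> \<le> S"
    using nn by (auto simp: cbox_Pair_iff)
  define M where "M = k1 * (eT + S + C)"
  define N where "N = k1 * (eT - c1) * (s1 - s2) - k1 * s2 * (c1 - c2)"
  have diff: "mm_field k0 k1 km1 k2 eT a - mm_field k0 k1 km1 k2 eT b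
      = (- N + km1 * (c1 - c2), N - (km1 + k2) * (c1 - c2))"
    unfolding ab N_def by (simp add: mm_field_def algebra_simps)
  have ds: "\<bar>s1 - s2\<bar> \<le> dist a b" and dc: "\<bar>c1 - c2\<bar> \<le> dist a b"
    using abs_fst_le_norm[of "a - b"] abs_snd_le_norm[of "a - b"] by (simp_all add: ab dist_norm)
  have "\<bar>N\<bar> \<le> \<bar>k1 * (eT - c1) * (s1 - s2)\<bar> + \<bar>k1 * s2 * (c1 - c2)\<bar>"
    unfolding N_def by (rule abs_triangle_ineq4)
  also have "\<dots> = k1 * \<bar>eT - c1\<bar> * \<bar>s1 - s2\<bar> + k1 * \<bar>s2\<bar> * \<bar>c1 - c2\<bar>"
    using nn by (simp add: abs_mult)
  also have "\<dots> \<le> k1 * (eT + C) * dist a b + k1 * S * dist a b"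
    using box ds dc nn by (intro add_mono mult_mono mult_left_mono) auto
  also have "\<dots> = M * dist a b"
    unfolding M_def by (simp add: algebra_simps)
  finally have N: "\<bar>N\<bar> \<le> M * dist a b" .
  have h1: "\<bar>- N + km1 * (c1 - c2)\<bar> \<le> \<bar>N\<bar> + km1 * dist a b"
    using abs_triangle_ineq[of "- N" "km1 * (c1 - c2)"] mult_left_mono[OF dc nn(2)] nn
    by (simp add: abs_mult)
  have h2: "\<bar>N - (km1 + k2) * (c1 - c2)\<bar> \<le> \<bar>N\<bar> + (km1 + k2) * dist a b"
    using abs_triangle_ineq4[of N "(km1 + k2) * (c1 - c2)"] mult_left_mono[OF dc, of "km1 + k2"] nn
    by (simp add: abs_mult)
  have "dist (mm_field k0 k1 km1 k2 eT a) (mm_field k0 k1 km1 k2 eT b)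
      \<le> \<bar>- N + km1 * (c1 - c2)\<bar> + \<bar>N - (km1 + k2) * (c1 - c2)\<bar>"
    unfolding dist_norm diff by (metis norm_Pair_le real_norm_def)
  also have "\<dots> \<le> 2 * (M * dist a b) + km1 * dist a b + (km1 + k2) * dist a b"
    using h1 h2 N by linarith
  also have "\<dots> = (2 * k1 * (eT + S + C) + 2 * km1 + k2) * dist a b"
    unfolding M_def by (simp add: algebra_simps)
  finally show "dist (mm_field k0 k1 km1 k2 eT a) (mm_field k0 k1 km1 k2 eT b)
      \<le> (2 * k1 * (eT + S + C) + 2 * km1 + k2) * dist a b" .
qed (use assms in simp)

lemma mem_cbox_real_pair:
  fixes S C :: real
  shows "p \<in> cbox (0, 0) (S, C) \<longleftrightarrow> 0 \<le> fst p \<and> fst p \<le> S \<and> 0 \<le> snd p \<and> snd p \<le> C"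
  by (cases p) (simp add: cbox_Pair_iff)

lemma clamp_real_pair_in_cbox:
  fixes S C :: real
  assumes "S \<ge> 0" "C \<ge> 0"
  shows "clamp (0, 0) (S, C) p \<in> cbox (0, 0) (S, C)"
  using assms by (cases p) (simp add: clamp_real_pair cbox_Pair_iff)

lemma mm_clamped_field_apply:
  fixes S C :: real
  assumes "S \<ge> 0" "C \<ge> 0"
  shows "mm_field k0 k1 km1 k2 eT (clamp (0, 0) (S, C) p) =
    mm_field k0 k1 km1 k2 eT (max 0 (min S (fst p)), max 0 (min C (snd p)))"
  using clamp_real_pair[OF assms, of "fst p" "snd p"] by simp

lemma mm_clamped_quadrant_invariant:
  fixes k0 k1 km1 k2 eT S C :: real
  assumes nn: "k0 \<ge> 0" "k1 \<ge> 0" "km1 \<ge> 0" "k2 \<ge> 0" "eT \<ge> 0" and S: "S \<ge> 0" and C: "eT \<le> C"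
    and dz: "\<And>\<tau>. \<tau> \<in> {0..b} \<Longrightarrow>
      (z has_vector_derivative mm_field k0 k1 km1 k2 eT (clamp (0, 0) (S, C) (z \<tau>))) (at \<tau> within {0..b})"
    and z0: "z 0 \<in> first_quadrant" "snd (z 0) \<le> C" and t: "t \<in> {0..b}"
  shows "z t \<in> first_quadrant \<and> snd (z t) \<le> C"
proof -
  have C0: "C \<ge> 0"
    using C nn by linarith
  define s where "s \<tau> = fst (z \<tau>)" for \<tau>
  define c where "c \<tau> = snd (z \<tau>)" for \<tau>
  define s' where "s' \<tau> = fst (mm_field k0 k1 km1 k2 eT (clamp (0, 0) (S, C) (z \<tau>)))" for \<tau>
  define c' where "c' \<tau> = snd (mm_field k0 k1 km1 k2 eT (clamp (0, 0) (S, C) (z \<tau>)))" for \<tau>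
  have ds: "(s has_real_derivative s' \<tau>) (at \<tau> within {0..b})"
    and dc: "(c has_real_derivative c' \<tau>) (at \<tau> within {0..b})" if "\<tau> \<in> {0..b}" for \<tau>
    unfolding s_def s'_def c_def c'_def
    using has_real_derivative_fst[OF dz[OF that]] has_real_derivative_snd[OF dz[OF that]] by auto
  have s': "s' \<tau> = k0 - k1 * (eT - max 0 (min C (c \<tau>))) * max 0 (min S (s \<tau>)) + km1 * max 0 (min C (c \<tau>))"
    and c': "c' \<tau> = k1 * (eT - max 0 (min C (c \<tau>))) * max 0 (min S (s \<tau>)) - (km1 + k2) * max 0 (min C (c \<tau>))"
    for \<tau>
    unfolding s'_def c'_def s_def c_def mm_clamped_field_apply[OF S C0] by (simp_all add: mm_field_apply)
  have "s t \<ge> 0 \<and> c t \<ge> 0"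
  proof (rule pair_deriv_bound_imp_nonneg[OF order_refl ds dc _ _ _ _ t])
    show "0 * (s \<tau> + min 0 (c \<tau>)) \<le> s' \<tau>" if "s \<tau> < 0" for \<tau>
    proof -
      have "max 0 (min S (s \<tau>)) = 0"
        using that S by simp
      moreover have "km1 * max 0 (min C (c \<tau>)) \<ge> 0"
        using nn(3) by simp
      ultimately show ?thesis
        using nn(1) by (simp add: s')
    qed
    show "0 * (c \<tau> + min 0 (s \<tau>)) \<le> c' \<tau>" if "c \<tau> < 0" for \<tau>
    proof -
      have "max 0 (min C (c \<tau>)) = 0"
        using that C0 by simp
      moreover have "k1 * eT * max 0 (min S (s \<tau>)) \<ge> 0"
        using nn(2,5) by simp
      ultimately show ?thesis
        by (simp add: c')
    qed
  qed (use z0 in \<open>simp_all add: s_def c_def first_quadrant_def\<close>)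
  moreover have "C - c t \<ge> 0"
  proof (rule deriv_bound_imp_nonneg[OF order_refl _ _ _ t])
    show "((\<lambda>\<tau>. C - c \<tau>) has_real_derivative - c' \<tau>) (at \<tau> within {0..b})" if "\<tau> \<in> {0..b}" for \<tau>
      using dc[OF that] by (auto intro!: derivative_eq_intros)
    show "0 * (C - c \<tau>) \<le> - c' \<tau>" if "C - c \<tau> < 0" for \<tau>
    proof -
      have "k1 * (eT - C) \<le> 0"
        using C nn(2) by (simp add: mult_nonneg_nonpos)
      then have "k1 * (eT - C) * max 0 (min S (s \<tau>)) \<le> 0"
        by (simp add: mult_nonpos_nonneg)
      moreover have "(km1 + k2) * C \<ge> 0"
        using nn C0 by simp
      ultimately show ?thesis
        using that C0 by (simp add: c')
    qed
  qed (use z0 in \<open>simp add: c_def\<close>)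
  ultimately show ?thesis
    by (simp add: s_def c_def first_quadrant_def)
qed

lemma mm_clamped_total_bound:
  fixes k0 k1 km1 k2 eT S C :: real
  assumes k2: "k2 \<ge> 0" and S: "S \<ge> 0" and C: "C \<ge> 0"
    and dz: "\<And>\<tau>. \<tau> \<in> {0..b} \<Longrightarrow>
      (z has_vector_derivative mm_field k0 k1 km1 k2 eT (clamp (0, 0) (S, C) (z \<tau>))) (at \<tau> within {0..b})"
    and t: "t \<in> {0..b}"
  shows "fst (z t) + snd (z t) \<le> fst (z 0) + snd (z 0) + k0 * t"
proof -
  let ?G = "\<lambda>\<tau>. mm_field k0 k1 km1 k2 eT (clamp (0, 0) (S, C) (z \<tau>))"
  have "fst (z 0) + snd (z 0) + k0 * t - (fst (z t) + snd (z t)) \<ge> 0"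
  proof (rule deriv_bound_imp_nonneg[OF order_refl _ _ _ t])
    show "((\<lambda>\<tau>. fst (z 0) + snd (z 0) + k0 * \<tau> - (fst (z \<tau>) + snd (z \<tau>))) has_real_derivative
        k0 - (fst (?G \<tau>) + snd (?G \<tau>))) (at \<tau> within {0..b})" if "\<tau> \<in> {0..b}" for \<tau>
      using has_real_derivative_fst[OF dz[OF that]] has_real_derivative_snd[OF dz[OF that]]
      by (auto intro!: derivative_eq_intros)
    \<comment> \<open>the total substrate \<open>s + c\<close> grows at rate \<open>k0 - k2 c\<close>\<close>
    show "0 * (fst (z 0) + snd (z 0) + k0 * \<tau> - (fst (z \<tau>) + snd (z \<tau>))) \<le> k0 - (fst (?G \<tau>) + snd (?G \<tau>))"
      for \<tau>
      using mult_nonneg_nonneg[OF k2, of "max 0 (min C (snd (z \<tau>)))"]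
      unfolding mm_clamped_field_apply[OF S C] by (simp add: mm_field_apply algebra_simps)
  qed simp
  then show ?thesis
    by simp
qed

lemma mm_unit_time_solution:
  fixes k0 k1 km1 k2 eT :: real
  assumes nn: "k0 \<ge> 0" "k1 \<ge> 0" "km1 \<ge> 0" "k2 \<ge> 0" "eT \<ge> 0" and q: "q \<in> first_quadrant"
  shows "\<exists>y. y 0 = q \<and> y 1 \<in> first_quadrant \<and>
    (\<forall>t\<in>{0..1}. (y has_vector_derivative mm_field k0 k1 km1 k2 eT (y t)) (at t within {0..1}))"
proof -
  let ?F = "mm_field k0 k1 km1 k2 eT"
  define S where "S = fst q + snd q + k0"
  define C where "C = max (snd q) eT"
  define L where "L = 2 * k1 * (eT + S + C) + 2 * km1 + k2"
  let ?G = "\<lambda>p. ?F (clamp (0, 0) (S, C) p)"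
  have S: "S \<ge> 0" and C: "C \<ge> 0" "eT \<le> C" "snd q \<le> C"
    using q nn unfolding S_def C_def first_quadrant_def by auto
  \<comment> \<open>outside the box the field is frozen at its value on the boundary, hence globally Lipschitz\<close>
  have lip: "L-lipschitz_on UNIV ?G"
  proof (rule lipschitz_onI)
    fix a b :: "real \<times> real"
    have "dist (?G a) (?G b) \<le> L * dist (clamp (0, 0) (S, C) a) (clamp (0, 0) (S, C) b)"
      using lipschitz_onD[OF mm_field_lipschitz_on_box[OF nn(2-5) S C(1)]
          clamp_real_pair_in_cbox[OF S C(1)] clamp_real_pair_in_cbox[OF S C(1)]]
      unfolding L_def by simp
    also have "\<dots> \<le> L * dist a b"
      unfolding L_def using nn S C by (intro mult_left_mono dist_clamps_le_dist_args) auto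
    finally show "dist (?G a) (?G b) \<le> L * dist a b" .
  qed (use nn S C in \<open>simp add: L_def\<close>)
  then have "(L + 1)-lipschitz_on UNIV ?G"
    by (rule lipschitz_on_mono) auto
  moreover have "L + 1 > 0"
    using lipschitz_on_nonneg[OF lip] by simp
  ultimately obtain z where z0: "z 0 = q"
    and dz: "\<And>t. t \<ge> 0 \<Longrightarrow> (z has_vector_derivative ?G (z t)) (at t within {0..})"
    using lipschitz_solution_halfline by blast
  have dz1: "(z has_vector_derivative ?G (z t)) (at t within {0..1})" if "t \<in> {0..1}" for t
    using dz[of t] that by (auto intro: has_vector_derivative_within_subset)
  have box: "z t \<in> cbox (0, 0) (S, C)" if "t \<in> {0..1}" for t
  proof -
    have "z t \<in> first_quadrant \<and> snd (z t) \<le> C"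
      using mm_clamped_quadrant_invariant[OF nn S C(2) dz1 _ _ that] z0 q C(3) by simp
    moreover have "fst (z t) + snd (z t) \<le> S"
      using mm_clamped_total_bound[OF nn(4) S C(1) dz1 that] z0 that mult_left_le[of t k0] nn(1)
      unfolding S_def by simp
    ultimately show ?thesis
      by (simp add: mem_cbox_real_pair first_quadrant_def)
  qed
  show ?thesis
  proof (intro exI conjI ballI)
    show "z 0 = q" by (rule z0)
    show "z 1 \<in> first_quadrant"
      using box[of 1] by (simp add: mem_cbox_real_pair first_quadrant_def)
    show "(z has_vector_derivative ?F (z t)) (at t within {0..1})" if "t \<in> {0..1}" for t
      using dz1[OF that] clamp_cancel_cbox[OF box[OF that]] by simp
  qed
qed

lemma mm_solution_exists:
  fixes k0 k1 km1 k2 eT :: real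
  assumes nn: "k0 \<ge> 0" "k1 \<ge> 0" "km1 \<ge> 0" "k2 \<ge> 0" "eT \<ge> 0" and p: "p \<in> first_quadrant"
  shows "\<exists>x. is_solution (mm_field k0 k1 km1 k2 eT) {0..} x \<and> x 0 = p"
proof -
  obtain x where "x 0 = p"
    and "\<forall>t\<ge>0. (x has_vector_derivative mm_field k0 k1 km1 k2 eT (x t)) (at t within {0..})"
    using solution_from_local_solutions[OF zero_less_one p mm_unit_time_solution[OF nn]] by blast
  then show ?thesis
    unfolding is_solution_def by (auto simp: is_interval_ci)
qed

section \<open>No nonconstant periodic solutions\<close>

lemma is_solution_UNIV_at:
  assumes "is_solution F UNIV x"
  shows "(x has_vector_derivative F (x t)) (at t)"
  using assms unfolding is_solution_def by simp

lemma mm_periodic_const_if_snd_const: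
  fixes k0 k1 km1 k2 eT :: real
  assumes sol: "is_solution (mm_field k0 k1 km1 k2 eT) UNIV x"
    and per: "\<And>t. x (t + T) = x t" and T: "T > 0"
    and c_const: "\<And>t. snd (x t) = snd (x 0)"
  shows "x t = x 0"
proof -
  let ?F = "mm_field k0 k1 km1 k2 eT"
  define \<kappa> where "\<kappa> = k0 - k2 * snd (x 0)"
  have "(\<lambda>t. snd (x t)) = (\<lambda>_. snd (x 0))"
    by (rule ext) (rule c_const)
  then have "((\<lambda>t. snd (x t)) has_real_derivative 0) (at t)" for t
    by simp
  then have "snd (?F (x t)) = 0" for t
    using DERIV_unique has_real_derivative_snd[OF is_solution_UNIV_at[OF sol]] by blast
  \<comment> \<open>hence \<open>s' = k0 - k2 c\<close> is constant, and periodicity forces it to vanish\<close>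
  then have "fst (?F (x t)) = \<kappa>" for t
    using c_const[of t] unfolding \<kappa>_def by (simp add: mm_field_apply algebra_simps)
  then have "((\<lambda>t. fst (x t) - \<kappa> * t) has_real_derivative 0) (at t)" for t
    using has_real_derivative_fst[OF is_solution_UNIV_at[OF sol]]
    by (auto intro!: derivative_eq_intros)
  then have s_affine: "fst (x t) - \<kappa> * t = fst (x 0)" for t
    using DERIV_isconst_all[of "\<lambda>t. fst (x t) - \<kappa> * t" t 0] by simp
  have "\<kappa> * T = 0"
    using s_affine[of T] per[of 0] by simp
  then have "\<kappa> = 0"
    using T by simp
  then show ?thesis
    using s_affine[of t] c_const[of t] by (simp add: prod_eq_iff)
qed

lemma mm_periodic_snd_const_k1_zero:
  fixes k0 km1 k2 eT :: real
  assumes nn: "km1 \<ge> 0" "k2 \<ge> 0"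
    and sol: "is_solution (mm_field k0 0 km1 k2 eT) UNIV x"
    and per: "\<And>t. x (t + T) = x t" and T: "T > 0"
  shows "snd (x t) = snd (x 0)"
proof -
  let ?c' = "\<lambda>t. snd (mm_field k0 0 km1 k2 eT (x t))"
  have dc: "((\<lambda>t. snd (x t)) has_real_derivative ?c' t) (at t)" for t
    using has_real_derivative_snd[OF is_solution_UNIV_at[OF sol]] .
  have c': "?c' t = - ((km1 + k2) * snd (x t))" for t
    by (simp add: mm_field_apply)
  \<comment> \<open>without binding, \<open>c' = -(km1 + k2) c\<close>, so \<open>c\<^sup>2\<close> is nonincreasing\<close>
  define q where "q t = snd (x t) * snd (x t)" for t
  have "(q has_real_derivative 2 * snd (x t) * ?c' t) (at t)" for t
    using DERIV_mult[OF dc dc] unfolding q_def by (simp add: algebra_simps)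
  moreover have "2 * snd (x t) * ?c' t \<le> 0" for t
    using mult_nonneg_nonneg[OF add_nonneg_nonneg[OF nn], of "snd (x t) * snd (x t)"]
    unfolding c' by (simp add: algebra_simps)
  moreover have "q (t + T) = q t" for t
    unfolding q_def using per by simp
  ultimately have c'_c: "2 * snd (x t) * ?c' t = 0" for t
    by (rule periodic_deriv_nonpos_imp_zero[where h' = "\<lambda>t. 2 * snd (x t) * ?c' t", OF _ _ _ T])
  have "?c' t = 0" for t
    using c'_c[of t] unfolding c' by auto
  then have "((\<lambda>t. snd (x t)) has_real_derivative 0) (at t)" for t
    using dc[of t] by simp
  then show ?thesis
    using DERIV_isconst_all[of "\<lambda>t. snd (x t)" t 0] by simp
qed

lemma mm_periodic_snd_const_touching:
  fixes k0 k1 km1 k2 eT :: real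
  assumes nn: "k1 \<ge> 0" "km1 \<ge> 0" "k2 \<ge> 0" "eT \<ge> 0"
    and sol: "is_solution (mm_field k0 k1 km1 k2 eT) UNIV x"
    and per: "\<And>t. x (t + T) = x t" and T: "T > 0"
    and touch: "snd (x t1) = eT"
  shows "snd (x t) = eT"
proof -
  define d where "d t = eT - snd (x t)" for t
  define g where "g t = k1 * fst (x t) + km1 + k2" for t
  have "continuous_on UNIV x"
    using is_solution_UNIV_at[OF sol] by (intro continuous_on_vector_derivative) auto
  then have g: "continuous_on UNIV g"
    unfolding g_def by (intro continuous_intros)
  have dd: "(d has_real_derivative (km1 + k2) * eT - g t * d t) (at t)" for t
    using has_real_derivative_snd[OF is_solution_UNIV_at[OF sol, of t]] unfolding d_def g_def
    by (auto intro!: derivative_eq_intros simp: mm_field_apply algebra_simps)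
  have d_per: "d (t + T) = d t" for t
    unfolding d_def using per by simp
  have d_nonneg: "0 \<le> d t" for t
  proof (rule periodic_forward_invariant_nonneg[where u = d and s = t1, OF d_per T])
    show "0 \<le> d b" if "a \<le> b" "0 \<le> d a" for a b
      using linear_deriv_imp_nonneg[OF dd g _ that] nn by simp
  qed (use touch in \<open>simp add: d_def\<close>)
  \<comment> \<open>so \<open>t1\<close> is a global minimum of \<open>d\<close>, where its derivative \<open>(km1 + k2) eT\<close> must vanish\<close>
  have "(km1 + k2) * eT - g t1 * d t1 = 0"
    by (rule DERIV_local_min[OF dd zero_less_one]) (use d_nonneg touch in \<open>simp add: d_def\<close>)
  then have rate: "(km1 + k2) * eT = 0"
    using touch by (simp add: d_def)
  define e where "e t = - d t" for t
  have de: "(e has_real_derivative 0 - g t * e t) (at t)" for t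
    using DERIV_minus[OF dd[of t]] rate unfolding e_def by simp
  have e_nonneg: "0 \<le> e t" for t
  proof (rule periodic_forward_invariant_nonneg[where u = e and s = t1, OF _ T])
    show "e (t + T) = e t" for t
      using d_per unfolding e_def by simp
    show "0 \<le> e b" if "a \<le> b" "0 \<le> e a" for a b
      using linear_deriv_imp_nonneg[OF de g _ that] by simp
    show "0 \<le> e t1"
      using touch unfolding e_def d_def by simp
  qed
  show ?thesis
    using d_nonneg[of t] e_nonneg[of t] unfolding e_def d_def by simp
qed

text \<open>Away from the line \<open>c = eT\<close>, \<open>c' = k1 (eT - c) w\<close> with \<open>w\<close> the horizontal distance to the
  nullcline \<open>c' = 0\<close>; in the variables \<open>(c, w)\<close> the system is a damped oscillator whose energy is
  the Lyapunov function below (\<open>\<sigma> = \<plusminus>1\<close> is the sign of \<open>eT - c\<close>).\<close>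

definition mm_nullcline_gap :: "real \<Rightarrow> real \<Rightarrow> real \<Rightarrow> real \<Rightarrow> real \<times> real \<Rightarrow> real" where
  "mm_nullcline_gap k1 km1 k2 eT p = fst p - (km1 + k2) * snd p / (k1 * (eT - snd p))"

definition mm_energy :: "real \<Rightarrow> real \<Rightarrow> real \<Rightarrow> real \<Rightarrow> real \<Rightarrow> real \<Rightarrow> real \<times> real \<Rightarrow> real" where
  "mm_energy \<sigma> k0 k1 km1 k2 eT p = \<sigma> * ((mm_nullcline_gap k1 km1 k2 eT p)\<^sup>2 / 2
     - k2 / k1 * snd p + (k0 - k2 * eT) / k1 * ln (\<sigma> * (eT - snd p)))"

lemma mm_field_snd_nullcline_gap:
  assumes "k1 \<noteq> 0" "eT - snd p \<noteq> 0"
  shows "snd (mm_field k0 k1 km1 k2 eT p) = k1 * (eT - snd p) * mm_nullcline_gap k1 km1 k2 eT p"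
  using assms by (simp add: mm_field_apply mm_nullcline_gap_def field_simps)

lemma mm_energy_deriv:
  fixes k0 k1 km1 k2 eT \<sigma> :: real
  assumes k1: "k1 \<noteq> 0" and sol: "is_solution (mm_field k0 k1 km1 k2 eT) UNIV x"
    and side: "\<And>t. \<sigma> * (eT - snd (x t)) > 0"
  shows "((\<lambda>t. mm_energy \<sigma> k0 k1 km1 k2 eT (x t)) has_real_derivative
    - (\<sigma> * (eT - snd (x t))) * k1 * (1 + (km1 + k2) * eT / (k1 * (eT - snd (x t))\<^sup>2))
      * (mm_nullcline_gap k1 km1 k2 eT (x t))\<^sup>2) (at t)"
proof -
  let ?F = "mm_field k0 k1 km1 k2 eT"
  define c where "c t = snd (x t)" for t
  define s' where "s' t = fst (?F (x t))" for t
  define c' where "c' t = snd (?F (x t))" for t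
  define w where "w t = mm_nullcline_gap k1 km1 k2 eT (x t)" for t
  define L where "L t = ln (\<sigma> * (eT - c t))" for t
  define Q' where "Q' = (km1 + k2) * eT / (k1 * (eT - c t)\<^sup>2)"
  have ne: "eT - c t \<noteq> 0" and \<sigma>: "\<sigma> \<noteq> 0"
    using side[of t] unfolding c_def by auto
  have ds: "((\<lambda>t. fst (x t)) has_real_derivative s' t) (at t)"
    and dc: "(c has_real_derivative c' t) (at t)" for t
    unfolding s'_def c'_def c_def
    using has_real_derivative_fst[OF is_solution_UNIV_at[OF sol]]
      has_real_derivative_snd[OF is_solution_UNIV_at[OF sol]] by auto
  have c': "c' t = k1 * (eT - c t) * w t"
    unfolding c'_def c_def w_def using mm_field_snd_nullcline_gap[OF k1 ne[unfolded c_def]] .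
  have s': "s' t = k0 - k2 * c t - c' t"
    unfolding s'_def c'_def c_def by (simp add: mm_field_apply algebra_simps)
  have quotient: "(g * d * (k * u) - g * v * (k * (0 - d))) / (k * u * (k * u)) = g * (u + v) / (k * u\<^sup>2) * d"
    if "u \<noteq> 0" "k \<noteq> 0" for g d k u v :: real
    using that by (simp add: field_simps power2_eq_square)
  have "k1 * (eT - c t) \<noteq> 0"
    using ne k1 by simp
  then have dQ: "((\<lambda>t. (km1 + k2) * c t / (k1 * (eT - c t))) has_real_derivative Q' * c' t) (at t)"
    by (rule DERIV_cong[OF DERIV_divide[OF DERIV_cmult[OF dc] DERIV_cmult[OF DERIV_diff[OF DERIV_const dc]]]])
      (use quotient[of "eT - c t" k1 "km1 + k2" "c' t" "c t"] ne k1 in \<open>simp add: Q'_def\<close>)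
  have "w = (\<lambda>t. fst (x t) - (km1 + k2) * c t / (k1 * (eT - c t)))"
    by (simp add: fun_eq_iff w_def mm_nullcline_gap_def c_def)
  then have dw: "(w has_real_derivative s' t - Q' * c' t) (at t)"
    using DERIV_diff[OF ds dQ] by simp
  have dL: "(L has_real_derivative - c' t / (eT - c t)) (at t)"
    unfolding L_def using dc side[of t] \<sigma> ne unfolding c_def[symmetric]
    by (auto intro!: derivative_eq_intros simp: field_simps)
  have fun_eq: "(\<lambda>t. mm_energy \<sigma> k0 k1 km1 k2 eT (x t))
      = (\<lambda>t. \<sigma> * ((w t * w t / 2 - k2 / k1 * c t) + (k0 - k2 * eT) / k1 * L t))"
    by (simp add: fun_eq_iff mm_energy_def w_def c_def L_def power2_eq_square)
  note dE = DERIV_cmult[OF DERIV_add[OF DERIV_diff[OF DERIV_cdivide[OF DERIV_mult[OF dw dw]]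
      DERIV_cmult[OF dc]] DERIV_cmult[OF dL]], of \<sigma> 2 "k2 / k1" "(k0 - k2 * eT) / k1"]
  have e1: "k2 / k1 * c' t = k2 * (eT - c t) * w t"
    and e2: "(k0 - k2 * eT) / k1 * (- c' t / (eT - c t)) = - (k0 - k2 * eT) * w t"
    unfolding c' using k1 ne by (simp_all add: field_simps)
  have half: "((s' t - Q' * c' t) * w t + (s' t - Q' * c' t) * w t) / 2 = (s' t - Q' * c' t) * w t"
    by simp
  \<comment> \<open>the terms coming from \<open>s' = k0 - k2 c - c'\<close> cancel against the potential, leaving the damping\<close>
  have "\<sigma> * ((((s' t - Q' * c' t) * w t + (s' t - Q' * c' t) * w t) / 2 - k2 / k1 * c' t)
        + (k0 - k2 * eT) / k1 * (- c' t / (eT - c t)))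
      = \<sigma> * ((s' t - Q' * c' t) * w t - k2 * (eT - c t) * w t - (k0 - k2 * eT) * w t)"
    unfolding half e1 e2 by (simp add: algebra_simps)
  also have "\<dots> = - (\<sigma> * (eT - c t)) * k1 * (1 + Q') * (w t)\<^sup>2"
    unfolding s' c' by (simp add: power2_eq_square algebra_simps)
  finally have "((\<lambda>t. mm_energy \<sigma> k0 k1 km1 k2 eT (x t)) has_real_derivative
      - (\<sigma> * (eT - c t)) * k1 * (1 + Q') * (w t)\<^sup>2) (at t)"
    unfolding fun_eq by (rule DERIV_cong[OF dE])
  then show ?thesis
    unfolding w_def c_def Q'_def .
qed

lemma mm_periodic_snd_const_energy:
  fixes k0 k1 km1 k2 eT \<sigma> :: real
  assumes nn: "km1 \<ge> 0" "k2 \<ge> 0" "eT \<ge> 0" and k1: "k1 > 0"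
    and sol: "is_solution (mm_field k0 k1 km1 k2 eT) UNIV x"
    and per: "\<And>t. x (t + T) = x t" and T: "T > 0"
    and side: "\<And>t. \<sigma> * (eT - snd (x t)) > 0"
  shows "snd (x t) = snd (x 0)"
proof -
  define a where "a t = \<sigma> * (eT - snd (x t)) * k1 * (1 + (km1 + k2) * eT / (k1 * (eT - snd (x t))\<^sup>2))"
    for t
  define w where "w t = mm_nullcline_gap k1 km1 k2 eT (x t)" for t
  have a: "a t > 0" for t
  proof -
    have "(km1 + k2) * eT / (k1 * (eT - snd (x t))\<^sup>2) \<ge> 0"
      using nn k1 by simp
    then show ?thesis
      unfolding a_def using mult_pos_pos[OF side[of t] k1] by (simp add: add_pos_nonneg)
  qed
  have "- a t * (w t)\<^sup>2 \<le> 0" for t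
    using a[of t] by simp
  then have aw: "- a t * (w t)\<^sup>2 = 0" for t
    using mm_energy_deriv[OF _ sol side] k1 per
    by (intro periodic_deriv_nonpos_imp_zero[where h = "\<lambda>t. mm_energy \<sigma> k0 k1 km1 k2 eT (x t)", OF _ _ _ T])
      (auto simp: a_def w_def)
  have "w t = 0" for t
    using aw[of t] a[of t] by simp
  then have "snd (mm_field k0 k1 km1 k2 eT (x t)) = 0" for t
    using mm_field_snd_nullcline_gap[of k1 eT "x t"] k1 side[of t] unfolding w_def by force
  then have "((\<lambda>t. snd (x t)) has_real_derivative 0) (at t)" for t
    using has_real_derivative_snd[OF is_solution_UNIV_at[OF sol, of t]] by simp
  then show ?thesis
    using DERIV_isconst_all[of "\<lambda>t. snd (x t)" t 0] by simp
qed

lemma continuous_nonvanishing_sgn: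
  fixes f :: "real \<Rightarrow> real"
  assumes cont: "continuous_on UNIV f" and nz: "\<And>t. f t \<noteq> 0"
  shows "sgn (f s) * f t > 0"
proof (rule ccontr)
  assume "\<not> sgn (f s) * f t > 0"
  then have "0 \<in> {min (f s) (f t)..max (f s) (f t)}"
    using nz[of s] nz[of t] by (auto simp: sgn_if min_def max_def split: if_splits)
  moreover have "{min (f s) (f t)..max (f s) (f t)} \<subseteq> range f"
    by (rule connected_contains_Icc[OF connected_continuous_image[OF cont connected_UNIV]])
      (auto simp: min_def max_def)
  ultimately show False
    using nz by auto
qed

lemma mm_periodic_solution_const:
  fixes k0 k1 km1 k2 eT :: real
  assumes nn: "k0 \<ge> 0" "k1 \<ge> 0" "km1 \<ge> 0" "k2 \<ge> 0" "eT \<ge> 0"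
    and sol: "is_solution (mm_field k0 k1 km1 k2 eT) UNIV x"
    and per: "\<And>t. x (t + T) = x t" and T: "T > 0"
  shows "x t = x 0"
proof (rule mm_periodic_const_if_snd_const[OF sol per T])
  fix t
  consider "k1 = 0" | "k1 > 0" "\<exists>t1. snd (x t1) = eT" | "k1 > 0" "\<forall>t1. snd (x t1) \<noteq> eT"
    using nn(2) by (cases "k1 = 0") auto
  then show "snd (x t) = snd (x 0)"
  proof cases
    case 1
    have "is_solution (mm_field k0 0 km1 k2 eT) UNIV x"
      using sol 1 by simp
    from this per T show ?thesis
      by (rule mm_periodic_snd_const_k1_zero[OF nn(3,4)])
  next
    case 2
    then show ?thesis
      using mm_periodic_snd_const_touching[OF nn(2-5) sol per T] by metis
  next
    case 3
    have "continuous_on UNIV x"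
      using is_solution_UNIV_at[OF sol] by (intro continuous_on_vector_derivative) auto
    then have "continuous_on UNIV (\<lambda>t. eT - snd (x t))"
      by (intro continuous_intros)
    then have "sgn (eT - snd (x 0)) * (eT - snd (x t)) > 0" for t
      by (rule continuous_nonvanishing_sgn) (use 3 in auto)
    then show ?thesis
      by (rule mm_periodic_snd_const_energy[OF nn(3-5) 3(1) sol per T])
  qed
qed

lemma mm_equilibria_count:
  fixes k0 k1 km1 k2 eT :: real
  assumes nn: "k0 \<ge> 0" "k1 \<ge> 0" "km1 \<ge> 0" "k2 \<ge> 0"
  defines "Z \<equiv> {p. mm_field k0 k1 km1 k2 eT p = 0}"
  shows "(infinite Z \<longleftrightarrow> (k0 = 0 \<and> k1 = 0) \<or> (k0 = 0 \<and> eT = 0) \<or> (k0 = 0 \<and> k2 = 0))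
    \<and> (finite Z \<longrightarrow> card Z \<in> {0, 1})
    \<and> (card Z = 1 \<longleftrightarrow> k1 \<noteq> 0 \<and> k2 \<noteq> 0 \<and> k2 * eT - k0 \<noteq> 0)"
proof -
  let ?inf = "(k0 = 0 \<and> k1 = 0) \<or> (k0 = 0 \<and> eT = 0) \<or> (k0 = 0 \<and> k2 = 0)"
  let ?one = "k1 \<noteq> 0 \<and> k2 \<noteq> 0 \<and> k2 * eT - k0 \<noteq> 0"
  have "\<not> ?inf \<Longrightarrow> Z = (if ?one then {((km1 + k2) * k0 / (k1 * (k2 * eT - k0)), k0 / k2)} else {})"
    using mm_equilibria_unique[of k1 k2 eT k0 km1] mm_equilibria_empty[OF nn(2-4), of eT k0]
    unfolding Z_def by auto
  moreover have "?inf \<Longrightarrow> infinite Z"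
    unfolding Z_def by (rule mm_equilibria_infinite)
  moreover have "?one \<Longrightarrow> \<not> ?inf"
    by auto
  ultimately show ?thesis
    by (cases ?inf; cases ?one) auto
qed

theorem lemma3p1:
  fixes k0 k1 km1 k2 eT :: real
  assumes "k0 \<ge> 0" and "k1 \<ge> 0" and "km1 \<ge> 0" and "k2 \<ge> 0" and "eT \<ge> 0"
  defines "F \<equiv> mm_field k0 k1 km1 k2 eT"
    and "P0 \<equiv> ((km1 + k2) * k0 / (k1 * (k2 * eT - k0)), k0 / k2)"
  shows
    \<comment> \<open>(a)\<close>
    "(infinite {p. F p = 0} \<longleftrightarrow>
       (k0 = 0 \<and> k1 = 0) \<or> (k0 = 0 \<and> eT = 0) \<or> (k0 = 0 \<and> k2 = 0))
    \<comment> \<open>(b)\<close>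
   \<and> (finite {p. F p = 0} \<longrightarrow> card {p. F p = 0} \<in> {0, 1})
   \<and> (card {p. F p = 0} = 1 \<longleftrightarrow> k1 \<noteq> 0 \<and> k2 \<noteq> 0 \<and> k2 * eT - k0 \<noteq> 0)
   \<and> (k1 \<noteq> 0 \<and> k2 \<noteq> 0 \<and> k2 * eT - k0 \<noteq> 0 \<longrightarrow>
        {p. F p = 0} = {P0}
      \<and> (P0 \<in> first_quadrant \<longleftrightarrow> k2 * eT - k0 > 0)
      \<and> (k2 * eT - k0 > 0 \<longrightarrow> attracting_node F P0)
      \<and> (P0 \<in> second_quadrant \<longleftrightarrow> k2 * eT - k0 < 0)
      \<and> (k2 * eT - k0 < 0 \<longrightarrow> saddle_point F P0))
    \<comment> \<open>(c)\<close>
   \<and> (\<forall>I x t. is_solution F I x \<and> 0 \<in> I \<and> x 0 \<in> first_quadrant \<and> t \<in> I \<and> t \<ge> 0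
        \<longrightarrow> x t \<in> first_quadrant)
   \<and> (\<forall>p \<in> first_quadrant. \<exists>x. is_solution F {0..} x \<and> x 0 = p)
   \<and> (km1 + k2 > 0 \<longrightarrow>
        (\<forall>x. eT > 0 \<and> is_solution F {0..} x \<and> x 0 \<in> first_quadrant
           \<longrightarrow> (\<exists>t>0. snd (x t) \<le> eT))
      \<and> (\<forall>I x t. is_solution F I x \<and> 0 \<in> I \<and> x 0 \<in> first_quadrant \<and> snd (x 0) \<le> eT
           \<and> t \<in> I \<and> t \<ge> 0 \<longrightarrow> x t \<in> first_quadrant \<and> snd (x t) \<le> eT))
    \<comment> \<open>(d)\<close>
   \<and> (\<forall>x T. is_solution F UNIV x \<and> T > 0 \<and> (\<forall>t. x (t + T) = x t)
        \<longrightarrow> (\<forall>t. x t = x 0))"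
proof -
  note nn = assms(1-5)
  note equilibria = mm_equilibria_count[OF nn(1-4)]
  show ?thesis
    unfolding F_def P0_def
    by (intro conjI)
      (use equilibria in blast, use equilibria in blast, use equilibria in blast,
       use mm_equilibria_unique mm_equilibrium_classification[OF nn] in blast,
       use mm_first_quadrant_invariant[OF nn] in blast,
       use mm_solution_exists[OF nn] in blast,
       use mm_enters_complex_bound[OF nn] mm_complex_bound_invariant[OF nn] in blast,
       use mm_periodic_solution_const[OF nn] in blast)
qed

end
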